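(* For every $n\in\mathbb N$, the relation $\to_n$ (reduction at depth $n$), restricted to terms of $\ell\Lambda_\infty^{4S}$, is strongly normalising: there is no infinite sequence $M_0\to_n M_1\to_n M_2\to_n\cdots$ with $M_0$ a term of $\ell\Lambda_\infty^{4S}$.
   Context: Preterms: possibly infinite trees generated by $M ::= x \mid MN \mid \lambda x.M \mid \lambda^{\downarrow}x.M \mid \lambda^{\uparrow}x.M \mid \downarrow M \mid \uparrow M$ ($\downarrow M$ inductive box, $\uparrow M$ coinductive box); substitution is capture-avoiding. Patterns: $x,\downarrow x,\uparrow x,\#x,\dagger x$; environments: finite sets of patterns, each variable in at most one; $\Theta,\Xi,\Psi,\Phi$ linear environments (sets of variables) with marked versions $\#\Theta$ etc.; $\Upsilon,\Pi$ environments with only patterns $y$, $\downarrow y$; commas are disjoint unions. A term of $\ell\Lambda_\infty^{4S}$ is a preterm $M$ with $\Gamma\vdash M$ derivable for some $\Gamma$ by: (vl) $\#\Theta,\uparrow\Xi,\dagger\Psi,x\vdash x$; (vd) $\#\Theta,\uparrow\Xi,\dagger\Psi,\#x\vdash x$; (va) $\#\Theta,\uparrow\Xi,\dagger\Psi,\dagger x\vdash x$; (a) from $\Upsilon,\#\Theta,\uparrow\Xi,\dagger\Psi\vdash M$ and $\Pi,\#\Theta,\uparrow\Xi,\dagger\Psi\vdash N$ infer $\Upsilon,\Pi,\#\Theta,\uparrow\Xi,\dagger\Psi\vdash MN$; (ll) $\Gamma,x\vdash M$ gives $\Gamma\vdash\lambda x.M$; (li)$_1$ $\Gamma,\#x\vdash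 M$ gives $\Gamma\vdash\lambda^\downarrow x.M$; (li)$_2$ $\Gamma,\downarrow x\vdash M$ gives $\Gamma\vdash\lambda^\downarrow x.M$; (lc) $\Gamma,\uparrow x\vdash M$ gives $\Gamma\vdash\lambda^\uparrow x.M$; (mi) from $\Xi,\uparrow\Psi,\dagger\Phi\vdash M$ infer $\#\Theta,\downarrow\Xi,\uparrow\Psi,\dagger\Phi\vdash\downarrow M$; (mc) from $\dagger\Xi,\dagger\Psi\vdash M$ infer $\#\Theta,\uparrow\Xi,\dagger\Psi\vdash\uparrow M$; (mc) coinductive, others inductive (every infinite branch of a derivation contains infinitely many (mc)). Basic reduction: $(\lambda x.M)N\mapsto M[N/x]$, $(\lambda^\downarrow x.M)(\downarrow N)\mapsto M[N/x]$, $(\lambda^\uparrow x.M)(\uparrow N)\mapsto M[N/x]$; $M\to_n N$ iff $M=C[L]$, $N=C[P]$, $L\mapsto P$, where $C$ is a one-hole context whose hole lies inside exactly $n$ coinductive boxes $\uparrow(\cdot)$ (and any number of inductive boxes). *)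

theory Defs
  imports Main
begin

text \<open>Var i: variable (de Bruijn index); App; Lam (linear abstraction);
  LamI (inductive abstraction \<lambda>\<down>); LamC (coinductive abstraction \<lambda>\<up>);
  BoxI (inductive box \<down>M); BoxC (coinductive box \<up>M).\<close>

codatatype trm =
    Var nat
  | App trm trm
  | Lam trm
  | LamI trm
  | LamC trm
  | BoxI trm
  | BoxC trm

primcorec lift :: "nat \<Rightarrow> trm \<Rightarrow> trm" where
  "lift k M = (case M of
      Var i \<Rightarrow> Var (if i < k then i else Suc i)
    | App a b \<Rightarrow> App (lift k a) (lift k b)
    | Lam a \<Rightarrow> Lam (lift (Suc k) a)
    | LamI a \<Rightarrow> LamI (lift (Suc k) a)
    | LamC a \<Rightarrow> LamC (lift (Suc k) a)
    | BoxI a \<Rightarrow> BoxI (lift k a)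
    | BoxC a \<Rightarrow> BoxC (lift k a))"

text \<open>Capture-avoiding substitution: substs k P M replaces index k in M by P
  (P already shifted under the k enclosing binders) and decrements indices > k.\<close>
primcorec substs :: "nat \<Rightarrow> trm \<Rightarrow> trm \<Rightarrow> trm" where
  "substs k P M = (case M of
      Var i \<Rightarrow> (if i < k then Var i else if i = k then
                 (case P of
                    Var j \<Rightarrow> Var j
                  | App a b \<Rightarrow> App a b
                  | Lam a \<Rightarrow> Lam a
                  | LamI a \<Rightarrow> LamI a
                  | LamC a \<Rightarrow> LamC a
                  | BoxI a \<Rightarrow> BoxI a
                  | BoxC a \<Rightarrow> BoxC a)
               else Var (i - 1))
    | App a b \<Rightarrow> App (substs k P a) (substs k P b)
    | Lam a \<Rightarrow> Lam (substs (Suc k) (lift 0 P) a)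
    | LamI a \<Rightarrow> LamI (substs (Suc k) (lift 0 P) a)
    | LamC a \<Rightarrow> LamC (substs (Suc k) (lift 0 P) a)
    | BoxI a \<Rightarrow> BoxI (substs k P a)
    | BoxC a \<Rightarrow> BoxC (substs k P a))"

text \<open>M[N/x] where x is the variable bound by the outermost removed binder.\<close>
definition subst0 :: "trm \<Rightarrow> trm \<Rightarrow> trm" where
  "subst0 M N = substs 0 N M"

text \<open>red n M N: M = C[L], N = C[P], L \<mapsto> P, with the hole of C under exactly
  n coinductive boxes.\<close>
inductive red :: "nat \<Rightarrow> trm \<Rightarrow> trm \<Rightarrow> bool" where
  beta_lin: "red 0 (App (Lam M) N) (subst0 M N)"
| beta_ind: "red 0 (App (LamI M) (BoxI N)) (subst0 M N)"
| beta_coind: "red 0 (App (LamC M) (BoxC N)) (subst0 M N)"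
| app_l: "red n M M' \<Longrightarrow> red n (App M N) (App M' N)"
| app_r: "red n N N' \<Longrightarrow> red n (App M N) (App M N')"
| lam: "red n M M' \<Longrightarrow> red n (Lam M) (Lam M')"
| lamI: "red n M M' \<Longrightarrow> red n (LamI M) (LamI M')"
| lamC: "red n M M' \<Longrightarrow> red n (LamC M) (LamC M')"
| boxI: "red n M M' \<Longrightarrow> red n (BoxI M) (BoxI M')"
| boxC: "red n M M' \<Longrightarrow> red (Suc n) (BoxC M) (BoxC M')"

text \<open>Patterns: PLin = x, PInd = \<down>x, PCo = \<up>x, PSharp = #x, PDag = \<dagger>x.
  An environment maps each variable to at most one pattern.\<close>
datatype pat = PLin | PInd | PCo | PSharp | PDag

type_synonym env = "nat \<Rightarrow> pat option"

definition shared_only :: "env \<Rightarrow> bool" where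
  "shared_only \<Gamma> \<longleftrightarrow> (\<forall>i p. \<Gamma> i = Some p \<longrightarrow> p \<in> {PSharp, PCo, PDag})"

definition ext :: "pat \<Rightarrow> env \<Rightarrow> env" where
  "ext p \<Gamma> = (\<lambda>i. if i = 0 then Some p else \<Gamma> (i - 1))"

text \<open>\<Gamma> = \<Upsilon>,\<Pi>,#\<Theta>,\<up>\<Xi>,\<dagger>\<Psi> with \<Gamma>1 = \<Upsilon>,#\<Theta>,\<up>\<Xi>,\<dagger>\<Psi> and \<Gamma>2 = \<Pi>,#\<Theta>,\<up>\<Xi>,\<dagger>\<Psi>.\<close>
definition app_split :: "env \<Rightarrow> env \<Rightarrow> env \<Rightarrow> bool" where
  "app_split \<Gamma> \<Gamma>1 \<Gamma>2 \<longleftrightarrow> (\<forall>i.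
     (\<Gamma> i = None \<longrightarrow> \<Gamma>1 i = None \<and> \<Gamma>2 i = None) \<and>
     (\<forall>p \<in> {PSharp, PCo, PDag}. \<Gamma> i = Some p \<longrightarrow> \<Gamma>1 i = Some p \<and> \<Gamma>2 i = Some p) \<and>
     (\<forall>p \<in> {PLin, PInd}. \<Gamma> i = Some p \<longrightarrow>
         (\<Gamma>1 i = Some p \<and> \<Gamma>2 i = None) \<or> (\<Gamma>1 i = None \<and> \<Gamma>2 i = Some p)))"

text \<open>Rule (mi): conclusion #\<Theta>,\<down>\<Xi>,\<up>\<Psi>,\<dagger>\<Phi>, premise \<Xi>,\<up>\<Psi>,\<dagger>\<Phi>.\<close>
definition mi_env :: "env \<Rightarrow> env \<Rightarrow> bool" where
  "mi_env \<Gamma> \<Delta> \<longleftrightarrow> (\<forall>i.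
     (\<Gamma> i = None \<longrightarrow> \<Delta> i = None) \<and>
     (\<Gamma> i = Some PLin \<longrightarrow> False) \<and>
     (\<Gamma> i = Some PSharp \<longrightarrow> \<Delta> i = None) \<and>
     (\<Gamma> i = Some PInd \<longrightarrow> \<Delta> i = Some PLin) \<and>
     (\<Gamma> i = Some PCo \<longrightarrow> \<Delta> i = Some PCo) \<and>
     (\<Gamma> i = Some PDag \<longrightarrow> \<Delta> i = Some PDag))"

text \<open>Rule (mc): conclusion #\<Theta>,\<up>\<Xi>,\<dagger>\<Psi>, premise \<dagger>\<Xi>,\<dagger>\<Psi>.\<close>
definition mc_env :: "env \<Rightarrow> env \<Rightarrow> bool" where
  "mc_env \<Gamma> \<Delta> \<longleftrightarrow> shared_only \<Gamma> \<and> (\<forall>i.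
     (\<Gamma> i = None \<longrightarrow> \<Delta> i = None) \<and>
     (\<Gamma> i = Some PSharp \<longrightarrow> \<Delta> i = None) \<and>
     (\<Gamma> i = Some PCo \<longrightarrow> \<Delta> i = Some PDag) \<and>
     (\<Gamma> i = Some PDag \<longrightarrow> \<Delta> i = Some PDag))"

text \<open>Inductive layer; the premise of (mc) refers to the coinductive predicate R.\<close>
inductive typ_ind :: "(env \<Rightarrow> trm \<Rightarrow> bool) \<Rightarrow> env \<Rightarrow> trm \<Rightarrow> bool" for R where
  vl: "\<Gamma> x = Some PLin \<Longrightarrow> shared_only (\<Gamma>(x := None)) \<Longrightarrow> typ_ind R \<Gamma> (Var x)"
| vd: "\<Gamma> x = Some PSharp \<Longrightarrow> shared_only (\<Gamma>(x := None)) \<Longrightarrow> typ_ind R \<Gamma> (Var x)"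
| va: "\<Gamma> x = Some PDag \<Longrightarrow> shared_only (\<Gamma>(x := None)) \<Longrightarrow> typ_ind R \<Gamma> (Var x)"
| a: "app_split \<Gamma> \<Gamma>1 \<Gamma>2 \<Longrightarrow> typ_ind R \<Gamma>1 M \<Longrightarrow> typ_ind R \<Gamma>2 N \<Longrightarrow> typ_ind R \<Gamma> (App M N)"
| ll: "typ_ind R (ext PLin \<Gamma>) M \<Longrightarrow> typ_ind R \<Gamma> (Lam M)"
| li1: "typ_ind R (ext PSharp \<Gamma>) M \<Longrightarrow> typ_ind R \<Gamma> (LamI M)"
| li2: "typ_ind R (ext PInd \<Gamma>) M \<Longrightarrow> typ_ind R \<Gamma> (LamI M)"
| lc: "typ_ind R (ext PCo \<Gamma>) M \<Longrightarrow> typ_ind R \<Gamma> (LamC M)"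
| mi: "mi_env \<Gamma> \<Delta> \<Longrightarrow> typ_ind R \<Delta> M \<Longrightarrow> typ_ind R \<Gamma> (BoxI M)"
| mc: "mc_env \<Gamma> \<Delta> \<Longrightarrow> R \<Delta> M \<Longrightarrow> typ_ind R \<Gamma> (BoxC M)"

lemma typ_ind_mono[mono]:
  assumes RS: "R \<le> S" shows "typ_ind R \<le> typ_ind S"
proof (intro le_funI le_boolI)
  fix \<Gamma> M assume "typ_ind R \<Gamma> M"
  then show "typ_ind S \<Gamma> M"
    by (induction rule: typ_ind.induct) (use RS in \<open>auto intro: typ_ind.intros\<close>)
qed

text \<open>Mixed inductive/coinductive derivability \<nu>X.\<mu>Y: every infinite branch
  contains infinitely many (mc).\<close>
coinductive typable :: "env \<Rightarrow> trm \<Rightarrow> bool" where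
  "typ_ind typable \<Gamma> M \<Longrightarrow> typable \<Gamma> M"

definition is_term :: "trm \<Rightarrow> bool" where
  "is_term M \<longleftrightarrow> (\<exists>\<Gamma>. finite (dom \<Gamma>) \<and> typable \<Gamma> M)"

end

theory Submission
  imports Defs "HOL-Library.Multiset"
begin

text \<open>Typing is preserved by reduction, up to turning some patterns \<open>\<down>y\<close> into \<open>#y\<close>.
  A typable term has, for every \<open>n\<close>, only finitely many nodes under exactly \<open>n\<close> coinductive
  boxes (treating a coinductive box at that level as a leaf), since every branch of a typing
  derivation meets (mc) after finitely many steps.  The multiset of the inductive-box depths of
  these nodes decreases in the multiset extension of \<open><\<close> with every reduction at depth \<open>n\<close>:
  a linear redex loses three nodes; an inductive redex either keeps the depths of the argument
  (\<open>\<down>x\<close> is used once, one box deeper) or copies it one level higher (\<open>#x\<close>), which lowers the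
  depth of every copied node; a coinductive redex erases its argument, as \<open>\<up>x\<close> occurs only
  under coinductive boxes.  Well-foundedness of the multiset order concludes the proof.\<close>

lemma lift_simps [simp]:
  "lift k (Var i) = Var (if i < k then i else Suc i)"
  "lift k (App a b) = App (lift k a) (lift k b)"
  "lift k (Lam a) = Lam (lift (Suc k) a)"
  "lift k (LamI a) = LamI (lift (Suc k) a)"
  "lift k (LamC a) = LamC (lift (Suc k) a)"
  "lift k (BoxI a) = BoxI (lift k a)"
  "lift k (BoxC a) = BoxC (lift k a)"
  by (subst lift.code; simp)+

lemma substs_simps [simp]:
  "substs k P (App a b) = App (substs k P a) (substs k P b)"
  "substs k P (Lam a) = Lam (substs (Suc k) (lift 0 P) a)"
  "substs k P (LamI a) = LamI (substs (Suc k) (lift 0 P) a)"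
  "substs k P (LamC a) = LamC (substs (Suc k) (lift 0 P) a)"
  "substs k P (BoxI a) = BoxI (substs k P a)"
  "substs k P (BoxC a) = BoxC (substs k P a)"
  by (subst substs.code; simp)+

lemma substs_Var:
  "substs k P (Var i) = (if i < k then Var i else if i = k then P else Var (i - 1))"
  by (subst substs.code; cases P; simp)

subsection \<open>Patterns and environments\<close>

definition shared_pat :: "pat \<Rightarrow> bool" where
  "shared_pat p \<longleftrightarrow> p \<in> {PSharp, PCo, PDag}"

lemma shared_pat_simps [simp]:
  "shared_pat PSharp" "shared_pat PCo" "shared_pat PDag" "\<not> shared_pat PLin" "\<not> shared_pat PInd"
  by (auto simp: shared_pat_def)

lemma pat_option_exhaust:
  obtains "x = None" | "x = Some PLin" | "x = Some PInd" | "x = Some PSharp" | "x = Some PCo"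
    | "x = Some PDag"
  by (metis not_None_eq pat.exhaust)

lemma shared_only_iff: "shared_only \<Gamma> \<longleftrightarrow> (\<forall>i p. \<Gamma> i = Some p \<longrightarrow> shared_pat p)"
  by (simp add: shared_only_def shared_pat_def)

lemma shared_only_cases:
  assumes "shared_only \<Gamma>"
  obtains "\<Gamma> i = None" | "\<Gamma> i = Some PSharp" | "\<Gamma> i = Some PCo" | "\<Gamma> i = Some PDag"
  using assms unfolding shared_only_def by (cases "\<Gamma> i") auto

lemma shared_onlyI:
  "(\<And>i. \<Gamma> i = None \<or> \<Gamma> i = Some PSharp \<or> \<Gamma> i = Some PCo \<or> \<Gamma> i = Some PDag) \<Longrightarrow> shared_only \<Gamma>"
  unfolding shared_only_def by (metis insertCI insert_commute option.distinct(1) option.inject)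

definition pat_split :: "pat option \<Rightarrow> pat option \<Rightarrow> pat option \<Rightarrow> bool" where
  "pat_split c c1 c2 \<longleftrightarrow> (c = None \<longrightarrow> c1 = None \<and> c2 = None) \<and>
     (\<forall>p. c = Some p \<longrightarrow> shared_pat p \<longrightarrow> c1 = Some p \<and> c2 = Some p) \<and>
     (\<forall>p. c = Some p \<longrightarrow> \<not> shared_pat p \<longrightarrow> (c1 = Some p \<and> c2 = None) \<or> (c1 = None \<and> c2 = Some p))"

lemma app_split_iff: "app_split \<Gamma> \<Gamma>1 \<Gamma>2 \<longleftrightarrow> (\<forall>i. pat_split (\<Gamma> i) (\<Gamma>1 i) (\<Gamma>2 i))"
  unfolding app_split_def pat_split_def
  apply (rule iff_allI)
  subgoal for i by (cases "\<Gamma> i" rule: pat_option_exhaust) simp_all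
  done

lemma app_split_sym: "app_split \<Gamma> \<Gamma>1 \<Gamma>2 \<Longrightarrow> app_split \<Gamma> \<Gamma>2 \<Gamma>1"
  unfolding app_split_def by blast

lemma ext_apply: "ext p \<Gamma> i = (if i = 0 then Some p else \<Gamma> (i - 1))"
  by (simp add: ext_def)

lemma ext_Suc [simp]: "ext p \<Gamma> (Suc i) = \<Gamma> i"
  by (simp add: ext_apply)

fun mi_pat :: "pat option \<Rightarrow> pat option" where
  "mi_pat (Some PInd) = Some PLin"
| "mi_pat (Some PSharp) = None"
| "mi_pat x = x"

fun mc_pat :: "pat option \<Rightarrow> pat option" where
  "mc_pat (Some PCo) = Some PDag"
| "mc_pat (Some PSharp) = None"
| "mc_pat x = x"

definition mi_premise :: "env \<Rightarrow> env" where
  "mi_premise \<Gamma> = mi_pat \<circ> \<Gamma>"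

definition mc_premise :: "env \<Rightarrow> env" where
  "mc_premise \<Gamma> = mc_pat \<circ> \<Gamma>"

lemma mi_premise_apply: "mi_premise \<Gamma> i = mi_pat (\<Gamma> i)"
  by (simp add: mi_premise_def)

lemma mc_premise_apply: "mc_premise \<Gamma> i = mc_pat (\<Gamma> i)"
  by (simp add: mc_premise_def)

lemma mi_env_iff: "mi_env \<Gamma> \<Delta> \<longleftrightarrow> (\<forall>i. \<Gamma> i \<noteq> Some PLin) \<and> \<Delta> = mi_premise \<Gamma>"
proof -
  have "(\<Gamma> i = None \<longrightarrow> \<Delta> i = None) \<and> (\<Gamma> i = Some PLin \<longrightarrow> False) \<and>
     (\<Gamma> i = Some PSharp \<longrightarrow> \<Delta> i = None) \<and> (\<Gamma> i = Some PInd \<longrightarrow> \<Delta> i = Some PLin) \<and>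
     (\<Gamma> i = Some PCo \<longrightarrow> \<Delta> i = Some PCo) \<and> (\<Gamma> i = Some PDag \<longrightarrow> \<Delta> i = Some PDag)
     \<longleftrightarrow> \<Gamma> i \<noteq> Some PLin \<and> \<Delta> i = mi_pat (\<Gamma> i)" for i
    by (cases "\<Gamma> i" rule: pat_option_exhaust) auto
  then show ?thesis
    unfolding mi_env_def fun_eq_iff mi_premise_apply by blast
qed

lemma mc_env_iff: "mc_env \<Gamma> \<Delta> \<longleftrightarrow> shared_only \<Gamma> \<and> \<Delta> = mc_premise \<Gamma>"
proof -
  have "(\<Gamma> i = None \<longrightarrow> \<Delta> i = None) \<and> (\<Gamma> i = Some PSharp \<longrightarrow> \<Delta> i = None) \<and>
     (\<Gamma> i = Some PCo \<longrightarrow> \<Delta> i = Some PDag) \<and> (\<Gamma> i = Some PDag \<longrightarrow> \<Delta> i = Some PDag)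
     \<longleftrightarrow> \<Delta> i = mc_pat (\<Gamma> i)" if "shared_only \<Gamma>" for i
    using that by (cases rule: shared_only_cases) auto
  then show ?thesis
    unfolding mc_env_def fun_eq_iff mc_premise_apply by blast
qed

lemma typable_iff: "typable \<Gamma> M \<longleftrightarrow> typ_ind typable \<Gamma> M"
  by (auto elim: typable.cases intro: typable.intros)

lemma typable_coinduct_upto:
  assumes "X \<Gamma> M"
    and "\<And>\<Gamma> M. X \<Gamma> M \<Longrightarrow> typ_ind (\<lambda>\<Gamma> M. X \<Gamma> M \<or> typable \<Gamma> M) \<Gamma> M"
  shows "typable \<Gamma> M"
  using assms(1) by (rule typable.coinduct) (use assms(2) in blast)

lemma typ_ind_monoI: "typ_ind R \<Gamma> M \<Longrightarrow> (\<And>\<Gamma> M. R \<Gamma> M \<Longrightarrow> S \<Gamma> M) \<Longrightarrow> typ_ind S \<Gamma> M"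
  using typ_ind_mono[of R S] by (auto simp: le_fun_def)

lemma typable_App:
  "typable \<Gamma> (App M N) \<longleftrightarrow> (\<exists>\<Gamma>1 \<Gamma>2. app_split \<Gamma> \<Gamma>1 \<Gamma>2 \<and> typable \<Gamma>1 M \<and> typable \<Gamma>2 N)"
  by (rule iffI, subst (asm) typable_iff, erule typ_ind.cases)
    (auto simp: typable_iff intro: typ_ind.a)

lemma typable_Lam: "typable \<Gamma> (Lam M) \<longleftrightarrow> typable (ext PLin \<Gamma>) M"
  by (rule iffI, subst (asm) typable_iff, erule typ_ind.cases)
    (auto simp: typable_iff intro: typ_ind.ll)

lemma typable_LamI:
  "typable \<Gamma> (LamI M) \<longleftrightarrow> typable (ext PSharp \<Gamma>) M \<or> typable (ext PInd \<Gamma>) M"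
  by (rule iffI, subst (asm) typable_iff, erule typ_ind.cases)
    (auto simp: typable_iff intro: typ_ind.li1 typ_ind.li2)

lemma typable_LamC: "typable \<Gamma> (LamC M) \<longleftrightarrow> typable (ext PCo \<Gamma>) M"
  by (rule iffI, subst (asm) typable_iff, erule typ_ind.cases)
    (auto simp: typable_iff intro: typ_ind.lc)

lemma typable_BoxI:
  "typable \<Gamma> (BoxI M) \<longleftrightarrow> (\<forall>i. \<Gamma> i \<noteq> Some PLin) \<and> typable (mi_premise \<Gamma>) M"
  by (rule iffI, subst (asm) typable_iff, erule typ_ind.cases)
    (auto simp: typable_iff mi_env_iff intro: typ_ind.mi)

lemma typable_BoxC: "typable \<Gamma> (BoxC M) \<longleftrightarrow> shared_only \<Gamma> \<and> typable (mc_premise \<Gamma>) M"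
  by (rule iffI, subst (asm) typable_iff, erule typ_ind.cases)
    (auto simp: typable_iff[of \<Gamma>] mc_env_iff intro: typ_ind.mc)

subsection \<open>Lifting\<close>

definition env_shift :: "nat \<Rightarrow> env \<Rightarrow> env" where
  "env_shift k \<Gamma> = (\<lambda>i. if i < k then \<Gamma> i else if i = k then None else \<Gamma> (i - 1))"

lemma env_shift_ext: "ext p (env_shift k \<Gamma>) = env_shift (Suc k) (ext p \<Gamma>)"
  by (auto simp: fun_eq_iff ext_apply env_shift_def)

lemma env_shift_upd:
  "(env_shift k \<Gamma>)((if x < k then x else Suc x) := None) = env_shift k (\<Gamma>(x := None))"
  by (auto simp: fun_eq_iff env_shift_def)

lemma env_shift_lifted_var: "env_shift k \<Gamma> (if x < k then x else Suc x) = \<Gamma> x"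
  by (auto simp: env_shift_def)

lemma shared_only_env_shift: "shared_only \<Gamma> \<Longrightarrow> shared_only (env_shift k \<Gamma>)"
  by (auto simp: shared_only_def env_shift_def)

lemma app_split_env_shift:
  "app_split \<Gamma> \<Gamma>1 \<Gamma>2 \<Longrightarrow> app_split (env_shift k \<Gamma>) (env_shift k \<Gamma>1) (env_shift k \<Gamma>2)"
  unfolding app_split_def env_shift_def by auto

lemma mi_env_env_shift: "mi_env \<Gamma> \<Delta> \<Longrightarrow> mi_env (env_shift k \<Gamma>) (env_shift k \<Delta>)"
  by (auto simp: mi_env_iff fun_eq_iff mi_premise_apply env_shift_def)

lemma mc_env_env_shift: "mc_env \<Gamma> \<Delta> \<Longrightarrow> mc_env (env_shift k \<Gamma>) (env_shift k \<Delta>)"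
  unfolding mc_env_iff
  by (auto simp: shared_only_env_shift) (auto simp: fun_eq_iff mc_premise_apply env_shift_def)

definition lift_image :: "(env \<Rightarrow> trm \<Rightarrow> bool) \<Rightarrow> env \<Rightarrow> trm \<Rightarrow> bool" where
  "lift_image R \<Gamma>' M' \<longleftrightarrow> (\<exists>\<Gamma> M k. R \<Gamma> M \<and> \<Gamma>' = env_shift k \<Gamma> \<and> M' = lift k M)"

lemma typ_ind_lift: "typ_ind R \<Gamma> M \<Longrightarrow> typ_ind (lift_image R) (env_shift k \<Gamma>) (lift k M)"
proof (induction arbitrary: k rule: typ_ind.induct)
  case (vl \<Gamma> x)
  then show ?case
    by (metis lift_simps(1) shared_only_env_shift env_shift_upd env_shift_lifted_var typ_ind.vl)
next
  case (vd \<Gamma> x)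
  then show ?case
    by (metis lift_simps(1) shared_only_env_shift env_shift_upd env_shift_lifted_var typ_ind.vd)
next
  case (va \<Gamma> x)
  then show ?case
    by (metis lift_simps(1) shared_only_env_shift env_shift_upd env_shift_lifted_var typ_ind.va)
next
  case (a \<Gamma> \<Gamma>1 \<Gamma>2 M N)
  then show ?case by (auto intro: typ_ind.a app_split_env_shift)
next
  case (ll \<Gamma> M)
  then show ?case by (auto intro!: typ_ind.ll simp: env_shift_ext)
next
  case (li1 \<Gamma> M)
  then show ?case by (auto intro!: typ_ind.li1 simp: env_shift_ext)
next
  case (li2 \<Gamma> M)
  then show ?case by (auto intro!: typ_ind.li2 simp: env_shift_ext)
next
  case (lc \<Gamma> M)
  then show ?case by (auto intro!: typ_ind.lc simp: env_shift_ext)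
next
  case (mi \<Gamma> \<Delta> M)
  then show ?case by (auto intro!: typ_ind.mi mi_env_env_shift)
next
  case (mc \<Gamma> \<Delta> M)
  then show ?case by (auto intro!: typ_ind.mc[OF mc_env_env_shift] simp: lift_image_def)
qed

lemma typable_lift:
  assumes "typable \<Gamma> M"
  shows "typable (env_shift k \<Gamma>) (lift k M)"
proof (rule typable_coinduct_upto[where X = "lift_image typable"])
  show "lift_image typable (env_shift k \<Gamma>) (lift k M)"
    using assms unfolding lift_image_def by blast
next
  fix \<Gamma>' M' assume "lift_image typable \<Gamma>' M'"
  then obtain \<Gamma>0 M0 k0 where "typable \<Gamma>0 M0" "\<Gamma>' = env_shift k0 \<Gamma>0" "M' = lift k0 M0"
    unfolding lift_image_def by blast
  then have "typ_ind (lift_image typable) \<Gamma>' M'"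
    using typ_ind_lift typable_iff by simp
  then show "typ_ind (\<lambda>\<Gamma> M. lift_image typable \<Gamma> M \<or> typable \<Gamma> M) \<Gamma>' M'"
    by (rule typ_ind_monoI) simp
qed

subsection \<open>Weakening\<close>

definition weakens :: "env \<Rightarrow> env \<Rightarrow> bool" where
  "weakens \<Gamma> \<Gamma>' \<longleftrightarrow> (\<forall>i. \<Gamma>' i = \<Gamma> i \<or> (\<Gamma> i = None \<and> (\<exists>p. \<Gamma>' i = Some p \<and> shared_pat p))
       \<or> (\<Gamma> i = Some PLin \<and> \<Gamma>' i = Some PSharp))"

lemma weakens_ext: "weakens \<Gamma> \<Gamma>' \<Longrightarrow> weakens (ext p \<Gamma>) (ext p \<Gamma>')"
  by (auto simp: weakens_def ext_apply)

lemma weakens_var: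
  assumes "weakens \<Gamma> \<Gamma>'" "\<Gamma> x = Some p" "shared_only (\<Gamma>(x := None))"
  shows "shared_only (\<Gamma>'(x := None))" "\<Gamma>' x = Some p \<or> (p = PLin \<and> \<Gamma>' x = Some PSharp)"
proof -
  have "shared_pat q" if "i \<noteq> x" "\<Gamma>' i = Some q" for i q
  proof -
    have "\<Gamma> i = None \<or> (\<exists>r. \<Gamma> i = Some r \<and> shared_pat r)"
      using assms(3)[unfolded shared_only_iff, rule_format, of i] \<open>i \<noteq> x\<close> by (cases "\<Gamma> i") auto
    with assms(1) that show ?thesis
      unfolding weakens_def by (metis option.inject option.simps(3) shared_pat_simps(4))
  qed
  then show "shared_only (\<Gamma>'(x := None))"
    unfolding shared_only_iff by (metis fun_upd_apply option.simps(3))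
  show "\<Gamma>' x = Some p \<or> (p = PLin \<and> \<Gamma>' x = Some PSharp)"
    using assms(1,2) unfolding weakens_def by (metis option.distinct(1) option.inject)
qed

text \<open>Shared patterns added by the weakening go to both sides of the split, and the \<open>#\<close>-version
  of a linear pattern to the side that had the linear one.\<close>

lemma weakens_app_split:
  assumes "weakens \<Gamma> \<Gamma>'" "app_split \<Gamma> \<Gamma>1 \<Gamma>2"
  obtains \<Gamma>1' \<Gamma>2' where "app_split \<Gamma>' \<Gamma>1' \<Gamma>2'" "weakens \<Gamma>1 \<Gamma>1'" "weakens \<Gamma>2 \<Gamma>2'"
proof -
  define G1 where "G1 = (\<lambda>i. if \<Gamma>' i = \<Gamma> i then \<Gamma>1 i else \<Gamma>' i)"
  define G2 where "G2 = (\<lambda>i. if \<Gamma>' i = \<Gamma> i then \<Gamma>2 i else \<Gamma>' i)"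
  have "pat_split (\<Gamma>' i) (G1 i) (G2 i) \<and>
     (G1 i = \<Gamma>1 i \<or> (\<Gamma>1 i = None \<and> (\<exists>p. G1 i = Some p \<and> shared_pat p))
        \<or> (\<Gamma>1 i = Some PLin \<and> G1 i = Some PSharp)) \<and>
     (G2 i = \<Gamma>2 i \<or> (\<Gamma>2 i = None \<and> (\<exists>p. G2 i = Some p \<and> shared_pat p))
        \<or> (\<Gamma>2 i = Some PLin \<and> G2 i = Some PSharp))" for i
  proof -
    have "\<Gamma>' i = \<Gamma> i \<or> (\<Gamma> i = None \<and> (\<exists>p. \<Gamma>' i = Some p \<and> shared_pat p))
       \<or> (\<Gamma> i = Some PLin \<and> \<Gamma>' i = Some PSharp)"
      using assms(1) unfolding weakens_def by blast
    moreover have "pat_split (\<Gamma> i) (\<Gamma>1 i) (\<Gamma>2 i)"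
      using assms(2) unfolding app_split_iff by blast
    ultimately show ?thesis
      unfolding G1_def G2_def pat_split_def by (cases "\<Gamma>1 i"; cases "\<Gamma>2 i"; auto)
  qed
  then show ?thesis
    using that[of G1 G2] unfolding app_split_iff weakens_def by blast
qed

lemma weakens_mi_env:
  assumes "weakens \<Gamma> \<Gamma>'" "mi_env \<Gamma> \<Delta>"
  shows "mi_env \<Gamma>' (mi_premise \<Gamma>')" "weakens \<Delta> (mi_premise \<Gamma>')"
proof -
  have nl: "\<Gamma> i \<noteq> Some PLin" for i
    using assms(2) unfolding mi_env_iff by auto
  then have w: "\<Gamma>' i = \<Gamma> i \<or> (\<Gamma> i = None \<and> (\<exists>p. \<Gamma>' i = Some p \<and> shared_pat p))" for i
    using assms(1) unfolding weakens_def by blast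
  have "\<Gamma>' i \<noteq> Some PLin" for i
    using w[of i] nl[of i] by auto
  then show "mi_env \<Gamma>' (mi_premise \<Gamma>')"
    by (simp add: mi_env_iff)
  have "mi_pat (\<Gamma>' i) = mi_pat (\<Gamma> i)
    \<or> (mi_pat (\<Gamma> i) = None \<and> (\<exists>p. mi_pat (\<Gamma>' i) = Some p \<and> shared_pat p))
    \<or> (mi_pat (\<Gamma> i) = Some PLin \<and> mi_pat (\<Gamma>' i) = Some PSharp)" for i
    using w[of i]
    by (cases "\<Gamma>' i" rule: pat_option_exhaust; cases "\<Gamma> i" rule: pat_option_exhaust) auto
  then show "weakens \<Delta> (mi_premise \<Gamma>')"
    using assms(2) unfolding mi_env_iff weakens_def mi_premise_apply by auto
qed

lemma weakens_mc_env:
  assumes "weakens \<Gamma> \<Gamma>'" "mc_env \<Gamma> \<Delta>"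
  shows "mc_env \<Gamma>' (mc_premise \<Gamma>')" "weakens \<Delta> (mc_premise \<Gamma>')"
proof -
  have sh: "shared_only \<Gamma>"
    using assms(2) unfolding mc_env_iff by auto
  then have w: "\<Gamma>' i = \<Gamma> i \<or> (\<Gamma> i = None \<and> (\<exists>p. \<Gamma>' i = Some p \<and> shared_pat p))" for i
    using assms(1) unfolding weakens_def shared_only_iff by (metis shared_pat_simps(4))
  have "shared_pat p" if "\<Gamma>' i = Some p" for i p
    using sh[unfolded shared_only_iff] w[of i] that by auto
  then have "shared_only \<Gamma>'"
    unfolding shared_only_iff by blast
  then show "mc_env \<Gamma>' (mc_premise \<Gamma>')"
    by (simp add: mc_env_iff)
  have "mc_pat (\<Gamma>' i) = mc_pat (\<Gamma> i)
    \<or> (mc_pat (\<Gamma> i) = None \<and> (\<exists>p. mc_pat (\<Gamma>' i) = Some p \<and> shared_pat p))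
    \<or> (mc_pat (\<Gamma> i) = Some PLin \<and> mc_pat (\<Gamma>' i) = Some PSharp)" for i
    using w[of i]
    by (cases "\<Gamma>' i" rule: pat_option_exhaust; cases "\<Gamma> i" rule: pat_option_exhaust) auto
  then show "weakens \<Delta> (mc_premise \<Gamma>')"
    using assms(2) unfolding mc_env_iff weakens_def mc_premise_apply by auto
qed

definition weaken_image :: "(env \<Rightarrow> trm \<Rightarrow> bool) \<Rightarrow> env \<Rightarrow> trm \<Rightarrow> bool" where
  "weaken_image R \<Gamma>' M \<longleftrightarrow> (\<exists>\<Gamma>. R \<Gamma> M \<and> weakens \<Gamma> \<Gamma>')"

lemma typ_ind_weaken: "typ_ind R \<Gamma> M \<Longrightarrow> weakens \<Gamma> \<Gamma>' \<Longrightarrow> typ_ind (weaken_image R) \<Gamma>' M"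
proof (induction arbitrary: \<Gamma>' rule: typ_ind.induct)
  case (vl \<Gamma> x)
  then show ?case
    using weakens_var[OF vl(3,1,2)] by (auto intro: typ_ind.vl typ_ind.vd)
next
  case (vd \<Gamma> x)
  then show ?case
    using weakens_var[OF vd(3,1,2)] by (auto intro: typ_ind.vd)
next
  case (va \<Gamma> x)
  then show ?case
    using weakens_var[OF va(3,1,2)] by (auto intro: typ_ind.va)
next
  case (a \<Gamma> \<Gamma>1 \<Gamma>2 M N)
  then show ?case
    by (metis weakens_app_split typ_ind.a)
next
  case (ll \<Gamma> M)
  then show ?case by (auto intro!: typ_ind.ll weakens_ext)
next
  case (li1 \<Gamma> M)
  then show ?case by (auto intro!: typ_ind.li1 weakens_ext)
next
  case (li2 \<Gamma> M)
  then show ?case by (auto intro!: typ_ind.li2 weakens_ext)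
next
  case (lc \<Gamma> M)
  then show ?case by (auto intro!: typ_ind.lc weakens_ext)
next
  case (mi \<Gamma> \<Delta> M)
  then show ?case
    using weakens_mi_env[OF mi(4,1)] by (auto intro!: typ_ind.mi)
next
  case (mc \<Gamma> \<Delta> M)
  then show ?case
    using weakens_mc_env[OF mc(3,1)] by (auto intro!: typ_ind.mc simp: weaken_image_def)
qed

lemma typable_weaken:
  assumes "typable \<Gamma> M" "weakens \<Gamma> \<Gamma>'"
  shows "typable \<Gamma>' M"
proof (rule typable_coinduct_upto[where X = "weaken_image typable"])
  show "weaken_image typable \<Gamma>' M"
    using assms unfolding weaken_image_def by blast
next
  fix \<Gamma>' M assume "weaken_image typable \<Gamma>' M"
  then obtain \<Gamma> where "typable \<Gamma> M" "weakens \<Gamma> \<Gamma>'"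
    unfolding weaken_image_def by blast
  then have "typ_ind (weaken_image typable) \<Gamma>' M"
    using typ_ind_weaken typable_iff by simp
  then show "typ_ind (\<lambda>\<Gamma> M. weaken_image typable \<Gamma> M \<or> typable \<Gamma> M) \<Gamma>' M"
    by (rule typ_ind_monoI) simp
qed

subsection \<open>Substitution\<close>

definition env_del :: "nat \<Rightarrow> env \<Rightarrow> env" where
  "env_del k \<Gamma> = (\<lambda>i. if i < k then \<Gamma> i else \<Gamma> (Suc i))"

definition env_compat :: "env \<Rightarrow> env \<Rightarrow> bool" where
  "env_compat A B \<longleftrightarrow> (\<forall>i p q. A i = Some p \<longrightarrow> B i = Some q \<longrightarrow> p = q \<and> shared_pat p)"

definition shared_part :: "env \<Rightarrow> env" where
  "shared_part G = (\<lambda>i. case G i of Some p \<Rightarrow> if shared_pat p then Some p else None | None \<Rightarrow> None)"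

definition dagger_only :: "env \<Rightarrow> bool" where
  "dagger_only G \<longleftrightarrow> (\<forall>i p. G i = Some p \<longrightarrow> p = PDag)"

text \<open>\<open>\<down>x\<close> and \<open>\<up>x\<close> are instantiated by the contents of a box, so it is the box that has
  to be typable.\<close>

fun arg_typable :: "pat option \<Rightarrow> env \<Rightarrow> trm \<Rightarrow> bool" where
  "arg_typable None G P = shared_only G"
| "arg_typable (Some PLin) G P = typable G P"
| "arg_typable (Some PSharp) G P = (shared_only G \<and> typable G P)"
| "arg_typable (Some PDag) G P = (dagger_only G \<and> typable G P)"
| "arg_typable (Some PCo) G P = typable G (BoxC P)"
| "arg_typable (Some PInd) G P = typable G (BoxI P)"

lemma env_del_apply: "env_del k \<Gamma> i = (if i < k then \<Gamma> i else \<Gamma> (Suc i))"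
  by (simp add: env_del_def)

lemma map_add_apply: "(B ++ A) i = (case A i of None \<Rightarrow> B i | Some p \<Rightarrow> Some p)"
  by (simp add: map_add_def)

lemma env_del_ext: "env_del (Suc k) (ext p \<Gamma>) = ext p (env_del k \<Gamma>)"
  by (auto simp: fun_eq_iff env_del_def ext_apply)

lemma env_del_0_ext: "env_del 0 (ext p \<Gamma>) = \<Gamma>"
  by (simp add: fun_eq_iff env_del_apply)

lemma map_add_ext: "env_shift 0 G ++ ext p \<Gamma> = ext p (G ++ \<Gamma>)"
proof
  fix i show "(env_shift 0 G ++ ext p \<Gamma>) i = ext p (G ++ \<Gamma>) i"
    by (cases i) (simp_all add: map_add_apply env_shift_def ext_apply split: option.split)
qed

lemma env_compat_ext: "env_compat \<Gamma> G \<Longrightarrow> env_compat (ext p \<Gamma>) (env_shift 0 G)"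
  by (auto simp: env_compat_def ext_apply env_shift_def)

lemma env_compat_map_le:
  "env_compat A B \<Longrightarrow> A' \<subseteq>\<^sub>m A \<Longrightarrow> B' \<subseteq>\<^sub>m B \<Longrightarrow> env_compat A' B'"
  unfolding env_compat_def by (metis domI map_le_def)

lemma env_del_map_le: "\<Gamma>' \<subseteq>\<^sub>m \<Gamma> \<Longrightarrow> env_del k \<Gamma>' \<subseteq>\<^sub>m env_del k \<Gamma>"
  unfolding map_le_def env_del_apply by (auto simp: dom_def)

lemma shared_part_map_le: "shared_part G \<subseteq>\<^sub>m G"
  unfolding map_le_def shared_part_def by (auto split: option.splits if_splits)

lemma shared_only_shared_part: "shared_only (shared_part G)"
  unfolding shared_only_iff shared_part_def by (auto split: option.splits if_splits)

lemma shared_part_id: "shared_only G \<Longrightarrow> shared_part G = G"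
  unfolding shared_only_iff shared_part_def fun_eq_iff by (auto split: option.splits)

lemma app_split_map_le:
  assumes "app_split \<Gamma> \<Gamma>1 \<Gamma>2"
  shows "\<Gamma>1 \<subseteq>\<^sub>m \<Gamma>" "\<Gamma>2 \<subseteq>\<^sub>m \<Gamma>"
proof -
  have "\<Gamma>1 i = Some p \<longrightarrow> \<Gamma> i = Some p" "\<Gamma>2 i = Some p \<longrightarrow> \<Gamma> i = Some p" for i p
    using assms[unfolded app_split_iff, rule_format, of i] unfolding pat_split_def
    by (cases "\<Gamma> i"; auto)+
  then show "\<Gamma>1 \<subseteq>\<^sub>m \<Gamma>" "\<Gamma>2 \<subseteq>\<^sub>m \<Gamma>"
    unfolding map_le_def by auto
qed

lemma app_split_shared_part: "app_split G G (shared_part G)"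
  unfolding app_split_iff pat_split_def shared_part_def by (auto split: option.splits)

lemma app_split_shared_only: "shared_only G \<Longrightarrow> app_split G G G"
  unfolding app_split_iff pat_split_def shared_only_iff by auto

lemma app_split_env_del:
  "app_split \<Gamma> \<Gamma>1 \<Gamma>2 \<Longrightarrow> app_split (env_del k \<Gamma>) (env_del k \<Gamma>1) (env_del k \<Gamma>2)"
  unfolding app_split_iff env_del_apply by simp

lemma pat_split_merge:
  assumes "pat_split a a1 a2" "pat_split b b1 b2"
    and "\<forall>p q. a = Some p \<longrightarrow> b = Some q \<longrightarrow> p = q \<and> shared_pat p"
  shows "pat_split (case a of None \<Rightarrow> b | Some p \<Rightarrow> Some p)
    (case a1 of None \<Rightarrow> b1 | Some p \<Rightarrow> Some p) (case a2 of None \<Rightarrow> b2 | Some p \<Rightarrow> Some p)"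
proof (cases a)
  case None
  then show ?thesis
    using assms(1,2) unfolding pat_split_def by simp
next
  case (Some p)
  show ?thesis
  proof (cases "shared_pat p")
    case True
    then show ?thesis
      using assms(1) Some unfolding pat_split_def by simp
  next
    case False
    then have "b = None"
      using assms(3) Some by (cases b) auto
    then have "b1 = None" "b2 = None"
      using assms(2) unfolding pat_split_def by simp_all
    then show ?thesis
      using assms(1) Some False unfolding pat_split_def by auto
  qed
qed

lemma app_split_map_add:
  assumes "app_split \<Gamma> \<Gamma>1 \<Gamma>2" "app_split G G1 G2" "env_compat \<Gamma> G"
  shows "app_split (G ++ \<Gamma>) (G1 ++ \<Gamma>1) (G2 ++ \<Gamma>2)"
  unfolding app_split_iff map_add_apply
proof
  fix i
  show "pat_split (case \<Gamma> i of None \<Rightarrow> G i | Some p \<Rightarrow> Some p)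
    (case \<Gamma>1 i of None \<Rightarrow> G1 i | Some p \<Rightarrow> Some p) (case \<Gamma>2 i of None \<Rightarrow> G2 i | Some p \<Rightarrow> Some p)"
    using assms unfolding app_split_iff env_compat_def by (blast intro: pat_split_merge)
qed

lemma pat_split_merge_parts:
  assumes "pat_split a a1 a2"
  shows "\<forall>p q. a2 = Some p \<longrightarrow> a1 = Some q \<longrightarrow> p = q \<and> shared_pat p"
    "(case a2 of None \<Rightarrow> a1 | Some p \<Rightarrow> Some p) = a"
proof -
  consider "a = None" | p where "a = Some p" "shared_pat p" | p where "a = Some p" "\<not> shared_pat p"
    by (cases a) auto
  note cases = this
  show "\<forall>p q. a2 = Some p \<longrightarrow> a1 = Some q \<longrightarrow> p = q \<and> shared_pat p"
    using cases assms unfolding pat_split_def by cases auto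
  show "(case a2 of None \<Rightarrow> a1 | Some p \<Rightarrow> Some p) = a"
    using cases assms unfolding pat_split_def by cases auto
qed

lemma app_split_compat: "app_split \<Gamma> \<Gamma>1 \<Gamma>2 \<Longrightarrow> env_compat \<Gamma>2 \<Gamma>1 \<and> \<Gamma>1 ++ \<Gamma>2 = \<Gamma>"
  unfolding app_split_iff env_compat_def fun_eq_iff map_add_apply
  using pat_split_merge_parts by blast

lemma dagger_only_env_shift: "dagger_only G \<Longrightarrow> dagger_only (env_shift k G)"
  by (simp add: dagger_only_def env_shift_def)

lemma dagger_only_shared_only: "dagger_only G \<Longrightarrow> shared_only G"
  unfolding dagger_only_def shared_only_iff by fastforce

lemma dagger_only_cases:
  assumes "dagger_only G"
  obtains "G i = None" | "G i = Some PDag"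
  using assms unfolding dagger_only_def by (cases "G i") auto

lemma mi_premise_dagger_only: "dagger_only G \<Longrightarrow> mi_premise G = G"
  unfolding fun_eq_iff mi_premise_apply by (metis dagger_only_cases mi_pat.simps(3,6))

lemma mc_premise_dagger_only: "dagger_only G \<Longrightarrow> mc_premise G = G"
  unfolding fun_eq_iff mc_premise_apply by (metis dagger_only_cases mc_pat.simps(3,6))

lemma mc_premise_dagger: "shared_only G \<Longrightarrow> dagger_only (mc_premise G)"
  unfolding dagger_only_def mc_premise_apply
proof (intro allI impI)
  fix i p assume "shared_only G" "mc_pat (G i) = Some p"
  then show "p = PDag"
    by (cases rule: shared_only_cases[of _ i]) simp_all
qed

lemma shared_only_mi_premise: "shared_only G \<Longrightarrow> shared_only (mi_premise G)"
proof (rule shared_onlyI)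
  fix i assume "shared_only G"
  then show "mi_premise G i = None \<or> mi_premise G i = Some PSharp \<or> mi_premise G i = Some PCo
      \<or> mi_premise G i = Some PDag"
    unfolding mi_premise_apply by (cases rule: shared_only_cases[of _ i]) simp_all
qed

lemma mc_premise_mi_premise: "shared_only G \<Longrightarrow> mc_premise (mi_premise G) = mc_premise G"
proof
  fix i assume "shared_only G"
  then show "mc_premise (mi_premise G) i = mc_premise G i"
    unfolding mc_premise_apply mi_premise_apply by (cases rule: shared_only_cases[of _ i]) simp_all
qed

lemma env_del_mi_premise: "env_del k (mi_premise \<Gamma>) = mi_premise (env_del k \<Gamma>)"
  by (simp add: fun_eq_iff env_del_apply mi_premise_apply)

lemma env_del_mc_premise: "env_del k (mc_premise \<Gamma>) = mc_premise (env_del k \<Gamma>)"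
  by (simp add: fun_eq_iff env_del_apply mc_premise_apply)

lemma mi_pat_merge:
  "\<forall>p q. a = Some p \<longrightarrow> b = Some q \<longrightarrow> p = q \<and> shared_pat p \<Longrightarrow>
   mi_pat (case a of None \<Rightarrow> b | Some p \<Rightarrow> Some p) = (case mi_pat a of None \<Rightarrow> mi_pat b | Some p \<Rightarrow> Some p)"
  by (cases a rule: pat_option_exhaust; cases b rule: pat_option_exhaust) simp_all

lemma mc_pat_merge:
  "\<forall>p q. a = Some p \<longrightarrow> b = Some q \<longrightarrow> p = q \<and> shared_pat p \<Longrightarrow>
   mc_pat (case a of None \<Rightarrow> b | Some p \<Rightarrow> Some p) = (case mc_pat a of None \<Rightarrow> mc_pat b | Some p \<Rightarrow> Some p)"
  by (cases a rule: pat_option_exhaust; cases b rule: pat_option_exhaust) simp_all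

lemma mi_pat_compat:
  "\<forall>p q. a = Some p \<longrightarrow> b = Some q \<longrightarrow> p = q \<and> shared_pat p \<Longrightarrow>
   \<forall>p q. mi_pat a = Some p \<longrightarrow> mi_pat b = Some q \<longrightarrow> p = q \<and> shared_pat p"
  by (cases a rule: pat_option_exhaust; cases b rule: pat_option_exhaust) simp_all

lemma mc_pat_compat:
  "\<forall>p q. a = Some p \<longrightarrow> b = Some q \<longrightarrow> p = q \<and> shared_pat p \<Longrightarrow>
   \<forall>p q. mc_pat a = Some p \<longrightarrow> mc_pat b = Some q \<longrightarrow> p = q \<and> shared_pat p"
  by (cases a rule: pat_option_exhaust; cases b rule: pat_option_exhaust) simp_all

lemma mi_premise_map_add:
  "env_compat A B \<Longrightarrow> mi_premise (B ++ A) = mi_premise B ++ mi_premise A"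
  unfolding env_compat_def fun_eq_iff mi_premise_apply map_add_apply by (simp add: mi_pat_merge)

lemma mc_premise_map_add:
  "env_compat A B \<Longrightarrow> mc_premise (B ++ A) = mc_premise B ++ mc_premise A"
  unfolding env_compat_def fun_eq_iff mc_premise_apply map_add_apply by (simp add: mc_pat_merge)

lemma env_compat_mi_premise: "env_compat A B \<Longrightarrow> env_compat (mi_premise A) (mi_premise B)"
  unfolding env_compat_def mi_premise_apply using mi_pat_compat by blast

lemma env_compat_mc_premise: "env_compat A B \<Longrightarrow> env_compat (mc_premise A) (mc_premise B)"
  unfolding env_compat_def mc_premise_apply using mc_pat_compat by blast

lemma arg_typable_shared_only:
  "arg_typable q G P \<Longrightarrow> q \<noteq> Some PLin \<Longrightarrow> q \<noteq> Some PInd \<Longrightarrow> shared_only G"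
  by (cases q rule: pat_option_exhaust) (auto simp: typable_BoxC dagger_only_shared_only)

lemma arg_typable_no_lin:
  assumes "arg_typable q G P" "q \<noteq> Some PLin"
  shows "G i \<noteq> Some PLin"
proof (cases "q = Some PInd")
  case True
  then show ?thesis
    using assms(1) by (simp add: typable_BoxI)
next
  case False
  then have "shared_only G"
    using assms arg_typable_shared_only by blast
  then show ?thesis
    by (cases rule: shared_only_cases[of _ i]) simp_all
qed

lemma arg_typable_lift: "arg_typable q G P \<Longrightarrow> arg_typable q (env_shift 0 G) (lift 0 P)"
  using typable_lift[of G "BoxI P" 0] typable_lift[of G "BoxC P" 0]
  by (cases q rule: pat_option_exhaust)
    (auto simp: shared_only_env_shift dagger_only_env_shift typable_lift)

lemma weakens_map_add_env_del:
  assumes "shared_only (\<Gamma>(k := None))" "env_compat (env_del k \<Gamma>) G"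
  shows "weakens G (G ++ env_del k \<Gamma>)"
proof -
  have "shared_pat p" if "env_del k \<Gamma> i = Some p" for i p
    using assms(1)[unfolded shared_only_iff, rule_format, of "if i < k then i else Suc i" p] that
    by (auto simp: env_del_apply split: if_splits)
  then show ?thesis
    using assms(2) unfolding weakens_def env_compat_def map_add_apply by (auto split: option.splits)
qed

lemma map_add_env_del_Var:
  assumes "\<Gamma> x = Some u" "x \<noteq> k" "shared_only (\<Gamma>(x := None))" "shared_only G"
  defines "x' \<equiv> if x < k then x else x - 1"
  shows "(G ++ env_del k \<Gamma>) x' = Some u" "shared_only ((G ++ env_del k \<Gamma>)(x' := None))"
proof -
  have "env_del k \<Gamma> x' = \<Gamma> x"
    using assms(2) unfolding x'_def env_del_apply by (cases "x < k"; cases x) auto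
  then show "(G ++ env_del k \<Gamma>) x' = Some u"
    using assms(1) by (simp add: map_add_apply)
  have "shared_pat p" if "i \<noteq> x'" "(G ++ env_del k \<Gamma>) i = Some p" for i p
  proof (cases "env_del k \<Gamma> i")
    case None
    then have "G i = Some p"
      using that(2) by (simp add: map_add_apply)
    then show ?thesis
      using assms(4) unfolding shared_only_iff by blast
  next
    case (Some q)
    define j where "j = (if i < k then i else Suc i)"
    have "j \<noteq> x"
      using that(1) assms(2) unfolding x'_def j_def by auto
    moreover have "\<Gamma> j = Some p"
      using Some that(2) unfolding j_def env_del_apply by (simp add: map_add_apply split: if_splits)
    ultimately have "(\<Gamma>(x := None)) j = Some p"
      by simp
    then show ?thesis
      using assms(3) unfolding shared_only_iff by blast
  qed
  then show "shared_only ((G ++ env_del k \<Gamma>)(x' := None))"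
    unfolding shared_only_iff by (metis fun_upd_apply option.distinct(1))
qed

definition subst_image :: "env \<Rightarrow> trm \<Rightarrow> bool" where
  "subst_image \<Delta> M' \<longleftrightarrow> (\<exists>\<Gamma> M k P G. typable \<Gamma> M \<and> arg_typable (\<Gamma> k) G P
      \<and> env_compat (env_del k \<Gamma>) G \<and> \<Delta> = G ++ env_del k \<Gamma> \<and> M' = substs k P M)"

lemma typ_ind_substs_Var:
  assumes "\<Gamma> x = Some u" "u \<in> {PLin, PSharp, PDag}" "shared_only (\<Gamma>(x := None))"
    and ok: "arg_typable (\<Gamma> k) G P" and c: "env_compat (env_del k \<Gamma>) G"
  shows "typ_ind (\<lambda>\<Gamma> M. subst_image \<Gamma> M \<or> typable \<Gamma> M) (G ++ env_del k \<Gamma>) (substs k P (Var x))"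
proof (cases "x = k")
  case True
  then have "typable G P"
    using ok assms(1,2) by auto
  then have "typable (G ++ env_del k \<Gamma>) P"
    using typable_weaken weakens_map_add_env_del assms(3) c True by blast
  then show ?thesis
    using True by (simp add: substs_Var typable_iff[of _ P] typ_ind_monoI)
next
  case False
  then have "\<Gamma> k \<noteq> Some PLin" "\<Gamma> k \<noteq> Some PInd"
    using assms(3) unfolding shared_only_iff by (metis fun_upd_other shared_pat_simps(4,5))+
  then have "shared_only G"
    using arg_typable_shared_only ok by blast
  note v = map_add_env_del_Var[OF assms(1) False assms(3) this]
  have e: "substs k P (Var x) = Var (if x < k then x else x - 1)"
    using False by (simp add: substs_Var)
  from assms(2) consider "u = PLin" | "u = PSharp" | "u = PDag"
    by blast
  then show ?thesis
    unfolding e using v by cases (metis typ_ind.vl, metis typ_ind.vd, metis typ_ind.va)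
qed

text \<open>In an application the argument's environment goes to the side that receives the
  substituted variable; the other side only needs its shared part.\<close>

lemma substs_app_split:
  assumes sp: "app_split \<Gamma> \<Gamma>1 \<Gamma>2" and ok: "arg_typable (\<Gamma> k) G P"
    and c: "env_compat (env_del k \<Gamma>) G"
  obtains G1 G2 where "app_split (G ++ env_del k \<Gamma>) (G1 ++ env_del k \<Gamma>1) (G2 ++ env_del k \<Gamma>2)"
    "arg_typable (\<Gamma>1 k) G1 P" "env_compat (env_del k \<Gamma>1) G1"
    "arg_typable (\<Gamma>2 k) G2 P" "env_compat (env_del k \<Gamma>2) G2"
proof -
  define G1 where "G1 = (if \<Gamma>1 k = None then shared_part G else G)"
  define G2 where "G2 = (if \<Gamma>2 k = None then shared_part G else G)"
  have spk: "pat_split (\<Gamma> k) (\<Gamma>1 k) (\<Gamma>2 k)"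
    using sp unfolding app_split_iff by blast
  have "app_split G G1 G2"
  proof (cases "\<Gamma> k = None \<or> (\<exists>p. \<Gamma> k = Some p \<and> shared_pat p)")
    case True
    then have "shared_only G"
      using arg_typable_shared_only[OF ok]
      by (metis option.distinct(1) option.inject shared_pat_simps(4,5))
    then show ?thesis
      unfolding G1_def G2_def using app_split_shared_only shared_part_id by auto
  next
    case False
    then have "(\<Gamma>1 k \<noteq> None \<and> \<Gamma>2 k = None) \<or> (\<Gamma>1 k = None \<and> \<Gamma>2 k \<noteq> None)"
      using spk unfolding pat_split_def by auto
    then show ?thesis
      unfolding G1_def G2_def using app_split_shared_part app_split_sym by auto
  qed
  then have "app_split (G ++ env_del k \<Gamma>) (G1 ++ env_del k \<Gamma>1) (G2 ++ env_del k \<Gamma>2)"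
    using app_split_map_add app_split_env_del[OF sp] c by blast
  moreover have "arg_typable (\<Gamma>1 k) G1 P" "arg_typable (\<Gamma>2 k) G2 P"
    using spk ok unfolding G1_def G2_def pat_split_def
    by (auto simp: shared_only_shared_part split: if_splits)
  moreover have "env_compat (env_del k \<Gamma>1) G1" "env_compat (env_del k \<Gamma>2) G2"
    using c app_split_map_le[OF sp] unfolding G1_def G2_def
    by (auto intro: env_compat_map_le env_del_map_le shared_part_map_le)
  ultimately show ?thesis
    using that by blast
qed

lemma substs_mi_env:
  assumes mi: "mi_env \<Gamma> \<Delta>" and ok: "arg_typable (\<Gamma> k) G P"
    and c: "env_compat (env_del k \<Gamma>) G"
  shows "mi_env (G ++ env_del k \<Gamma>) (mi_premise G ++ env_del k \<Delta>)"
    "arg_typable (\<Delta> k) (mi_premise G) P" "env_compat (env_del k \<Delta>) (mi_premise G)"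
proof -
  have nl: "\<Gamma> i \<noteq> Some PLin" for i
    using mi unfolding mi_env_iff by auto
  have \<Delta>: "\<Delta> = mi_premise \<Gamma>"
    using mi unfolding mi_env_iff by auto
  have gl: "G i \<noteq> Some PLin" for i
    using arg_typable_no_lin ok nl by blast
  have "(G ++ env_del k \<Gamma>) i \<noteq> Some PLin" for i
    using gl[of i] nl[of "if i < k then i else Suc i"]
    by (auto simp: map_add_apply env_del_apply split: option.split)
  then show "mi_env (G ++ env_del k \<Gamma>) (mi_premise G ++ env_del k \<Delta>)"
    unfolding mi_env_iff \<Delta> env_del_mi_premise mi_premise_map_add[OF c] by blast
  show "env_compat (env_del k \<Delta>) (mi_premise G)"
    unfolding \<Delta> env_del_mi_premise using env_compat_mi_premise[OF c] .
  have \<Delta>k: "\<Delta> k = mi_pat (\<Gamma> k)"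
    unfolding \<Delta> mi_premise_apply ..
  show "arg_typable (\<Delta> k) (mi_premise G) P"
  proof (cases "\<Gamma> k" rule: pat_option_exhaust)
    case 2
    then show ?thesis using nl by blast
  next
    case 3
    then show ?thesis
      using ok \<Delta>k by (simp add: typable_BoxI)
  next
    case 5
    then have "shared_only G" "typable (mc_premise G) P"
      using ok by (simp_all add: typable_BoxC)
    then show ?thesis
      using 5 \<Delta>k by (simp add: typable_BoxC shared_only_mi_premise mc_premise_mi_premise)
  next
    case 6
    then show ?thesis
      using ok \<Delta>k by (simp add: mi_premise_dagger_only)
  qed (use ok \<Delta>k shared_only_mi_premise in simp_all)
qed

lemma substs_mc_env:
  assumes mc: "mc_env \<Gamma> \<Delta>" and ok: "arg_typable (\<Gamma> k) G P"
    and c: "env_compat (env_del k \<Gamma>) G"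
  shows "mc_env (G ++ env_del k \<Gamma>) (mc_premise G ++ env_del k \<Delta>)"
    "arg_typable (\<Delta> k) (mc_premise G) P" "env_compat (env_del k \<Delta>) (mc_premise G)"
proof -
  have sh: "shared_only \<Gamma>" and \<Delta>: "\<Delta> = mc_premise \<Gamma>"
    using mc unfolding mc_env_iff by auto
  have "\<Gamma> k \<noteq> Some PLin" "\<Gamma> k \<noteq> Some PInd"
    using sh[unfolded shared_only_iff, rule_format, of k] by auto
  then have shG: "shared_only G"
    using arg_typable_shared_only ok by blast
  have "shared_only (G ++ env_del k \<Gamma>)"
    using sh shG unfolding shared_only_iff
    by (auto simp: map_add_apply env_del_apply split: option.splits if_splits)
  then show "mc_env (G ++ env_del k \<Gamma>) (mc_premise G ++ env_del k \<Delta>)"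
    unfolding mc_env_iff \<Delta> env_del_mc_premise mc_premise_map_add[OF c] by blast
  show "env_compat (env_del k \<Delta>) (mc_premise G)"
    unfolding \<Delta> env_del_mc_premise using env_compat_mc_premise[OF c] .
  have \<Delta>k: "\<Delta> k = mc_pat (\<Gamma> k)"
    unfolding \<Delta> mc_premise_apply ..
  show "arg_typable (\<Delta> k) (mc_premise G) P"
    using sh
  proof (cases rule: shared_only_cases[of _ k])
    case 3
    then show ?thesis
      using ok \<Delta>k by (simp add: typable_BoxC mc_premise_dagger)
  next
    case 4
    then show ?thesis
      using ok \<Delta>k by (simp add: mc_premise_dagger_only)
  qed (use ok \<Delta>k shG mc_premise_dagger dagger_only_shared_only in simp_all)
qed

lemma substs_binder:
  assumes "arg_typable (\<Gamma> k) G P" "env_compat (env_del k \<Gamma>) G"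
  shows "arg_typable (ext p \<Gamma> (Suc k)) (env_shift 0 G) (lift 0 P)"
    "env_compat (env_del (Suc k) (ext p \<Gamma>)) (env_shift 0 G)"
    "env_shift 0 G ++ env_del (Suc k) (ext p \<Gamma>) = ext p (G ++ env_del k \<Gamma>)"
  using assms by (simp_all add: arg_typable_lift env_del_ext env_compat_ext map_add_ext)

lemma typ_ind_substs:
  "typ_ind typable \<Gamma> M \<Longrightarrow> arg_typable (\<Gamma> k) G P \<Longrightarrow> env_compat (env_del k \<Gamma>) G \<Longrightarrow>
   typ_ind (\<lambda>\<Gamma> M. subst_image \<Gamma> M \<or> typable \<Gamma> M) (G ++ env_del k \<Gamma>) (substs k P M)"
proof (induction arbitrary: k P G rule: typ_ind.induct)
  case (vl \<Gamma> x)
  then show ?case using typ_ind_substs_Var by blast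
next
  case (vd \<Gamma> x)
  then show ?case using typ_ind_substs_Var by blast
next
  case (va \<Gamma> x)
  then show ?case using typ_ind_substs_Var by blast
next
  case (a \<Gamma> \<Gamma>1 \<Gamma>2 M N)
  obtain G1 G2 where
    "app_split (G ++ env_del k \<Gamma>) (G1 ++ env_del k \<Gamma>1) (G2 ++ env_del k \<Gamma>2)"
    "arg_typable (\<Gamma>1 k) G1 P" "env_compat (env_del k \<Gamma>1) G1"
    "arg_typable (\<Gamma>2 k) G2 P" "env_compat (env_del k \<Gamma>2) G2"
    using substs_app_split[OF a.hyps(1) a.prems] .
  then show ?case
    using a.IH by (auto intro: typ_ind.a)
next
  case (ll \<Gamma> M)
  note b = substs_binder[OF ll.prems, of PLin]
  show ?case using ll.IH[OF b(1,2)] b(3) by (auto intro: typ_ind.ll)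
next
  case (li1 \<Gamma> M)
  note b = substs_binder[OF li1.prems, of PSharp]
  show ?case using li1.IH[OF b(1,2)] b(3) by (auto intro: typ_ind.li1)
next
  case (li2 \<Gamma> M)
  note b = substs_binder[OF li2.prems, of PInd]
  show ?case using li2.IH[OF b(1,2)] b(3) by (auto intro: typ_ind.li2)
next
  case (lc \<Gamma> M)
  note b = substs_binder[OF lc.prems, of PCo]
  show ?case using lc.IH[OF b(1,2)] b(3) by (auto intro: typ_ind.lc)
next
  case (mi \<Gamma> \<Delta> M)
  note s = substs_mi_env[OF mi.hyps(1) mi.prems]
  then show ?case using mi.IH[OF s(2,3)] by (auto intro: typ_ind.mi)
next
  case (mc \<Gamma> \<Delta> M)
  note s = substs_mc_env[OF mc.hyps(1) mc.prems]
  have "subst_image (mc_premise G ++ env_del k \<Delta>) (substs k P M)"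
    unfolding subst_image_def using mc.hyps(2) s(2,3) by blast
  then show ?case using s(1) by (auto intro: typ_ind.mc)
qed

lemma typable_substs:
  assumes "typable \<Gamma> M" "arg_typable (\<Gamma> k) G P" "env_compat (env_del k \<Gamma>) G"
  shows "typable (G ++ env_del k \<Gamma>) (substs k P M)"
proof (rule typable_coinduct_upto[where X = subst_image])
  show "subst_image (G ++ env_del k \<Gamma>) (substs k P M)"
    using assms unfolding subst_image_def by blast
next
  fix \<Delta> M' assume "subst_image \<Delta> M'"
  then obtain \<Gamma> M k P G where "typable \<Gamma> M" "arg_typable (\<Gamma> k) G P"
    "env_compat (env_del k \<Gamma>) G" "\<Delta> = G ++ env_del k \<Gamma>" "M' = substs k P M"
    unfolding subst_image_def by blast
  then show "typ_ind (\<lambda>\<Gamma> M. subst_image \<Gamma> M \<or> typable \<Gamma> M) \<Delta> M'"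
    using typ_ind_substs typable_iff by simp
qed

subsection \<open>Subject reduction\<close>

text \<open>Reducing an inductive redex whose abstraction uses the pattern \<open>#x\<close> may force some \<open>\<down>y\<close>
  in the environment to become \<open>#y\<close>, since the contents of the box are duplicated.\<close>

definition sharpens :: "env \<Rightarrow> env \<Rightarrow> bool" where
  "sharpens \<Gamma> \<Gamma>' \<longleftrightarrow> (\<forall>i. \<Gamma>' i = \<Gamma> i \<or> (\<Gamma> i = Some PInd \<and> \<Gamma>' i = Some PSharp))"

lemma sharpens_refl: "sharpens \<Gamma> \<Gamma>"
  by (simp add: sharpens_def)

lemma sharpens_no_ind: "(\<And>i. \<Gamma> i \<noteq> Some PInd) \<Longrightarrow> sharpens \<Gamma> \<Gamma>' \<Longrightarrow> \<Gamma>' = \<Gamma>"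
  unfolding sharpens_def fun_eq_iff by metis

lemma mi_premise_no_ind: "mi_premise \<Gamma> i \<noteq> Some PInd"
  unfolding mi_premise_apply by (cases "\<Gamma> i" rule: pat_option_exhaust) simp_all

lemma mc_premise_no_ind:
  assumes "shared_only \<Gamma>"
  shows "mc_premise \<Gamma> i \<noteq> Some PInd"
  using assms unfolding mc_premise_apply by (cases rule: shared_only_cases[of _ i]) simp_all

lemma sharpens_ext:
  assumes "sharpens (ext p \<Gamma>) \<Gamma>''"
  obtains p' \<Gamma>' where "\<Gamma>'' = ext p' \<Gamma>'" "sharpens \<Gamma> \<Gamma>'" "p' = p \<or> (p = PInd \<and> p' = PSharp)"
proof -
  obtain p' where p': "\<Gamma>'' 0 = Some p'" "p' = p \<or> (p = PInd \<and> p' = PSharp)"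
    using assms unfolding sharpens_def by (metis ext_apply option.inject)
  have "\<Gamma>'' = ext p' (\<lambda>i. \<Gamma>'' (Suc i))"
    using p'(1) by (auto simp: fun_eq_iff ext_apply)
  moreover have "sharpens \<Gamma> (\<lambda>i. \<Gamma>'' (Suc i))"
    using assms unfolding sharpens_def by (metis ext_Suc)
  ultimately show ?thesis
    using that p'(2) by blast
qed

lemma sharpens_app_split:
  assumes sp: "app_split \<Gamma> \<Gamma>1 \<Gamma>2" and sh: "sharpens \<Gamma>1 \<Gamma>1'"
  obtains \<Gamma>' \<Gamma>2' where "app_split \<Gamma>' \<Gamma>1' \<Gamma>2'" "weakens \<Gamma>2 \<Gamma>2'" "sharpens \<Gamma> \<Gamma>'"
proof -
  define G where "G = (\<lambda>i. if \<Gamma>1' i \<noteq> \<Gamma>1 i then \<Gamma>1' i else \<Gamma> i)"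
  define G2 where "G2 = (\<lambda>i. if \<Gamma>1' i \<noteq> \<Gamma>1 i then Some PSharp else \<Gamma>2 i)"
  have "pat_split (G i) (\<Gamma>1' i) (G2 i) \<and>
     (G2 i = \<Gamma>2 i \<or> (\<Gamma>2 i = None \<and> (\<exists>p. G2 i = Some p \<and> shared_pat p))
        \<or> (\<Gamma>2 i = Some PLin \<and> G2 i = Some PSharp))
     \<and> (G i = \<Gamma> i \<or> (\<Gamma> i = Some PInd \<and> G i = Some PSharp))" for i
  proof (cases "\<Gamma>1' i = \<Gamma>1 i")
    case True
    then show ?thesis
      using sp unfolding G_def G2_def app_split_iff by auto
  next
    case False
    then have "\<Gamma>1 i = Some PInd" "\<Gamma>1' i = Some PSharp"
      using sh unfolding sharpens_def by auto
    moreover have "pat_split (\<Gamma> i) (\<Gamma>1 i) (\<Gamma>2 i)"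
      using sp unfolding app_split_iff by blast
    ultimately have "\<Gamma> i = Some PInd" "\<Gamma>2 i = None"
      unfolding pat_split_def by (cases "\<Gamma> i"; auto)+
    then show ?thesis
      using False \<open>\<Gamma>1' i = Some PSharp\<close> unfolding G_def G2_def pat_split_def by auto
  qed
  then show ?thesis
    using that[of G G2] unfolding app_split_iff weakens_def sharpens_def by blast
qed

lemma typable_subst0:
  assumes "typable (ext p \<Gamma>1) M" "arg_typable (Some p) \<Gamma>2 N" "env_compat \<Gamma>1 \<Gamma>2"
  shows "typable (\<Gamma>2 ++ \<Gamma>1) (subst0 M N)"
  using typable_substs[of "ext p \<Gamma>1" M 0 \<Gamma>2 N] assms
  by (simp add: subst0_def env_del_0_ext ext_apply)

lemma typable_beta_lin:
  assumes "typable \<Gamma> (App (Lam M) N)"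
  shows "typable \<Gamma> (subst0 M N)"
proof -
  obtain \<Gamma>1 \<Gamma>2 where sp: "app_split \<Gamma> \<Gamma>1 \<Gamma>2" and "typable (ext PLin \<Gamma>1) M" "typable \<Gamma>2 N"
    using assms by (auto simp: typable_App typable_Lam)
  moreover have "env_compat \<Gamma>1 \<Gamma>2" "\<Gamma>2 ++ \<Gamma>1 = \<Gamma>"
    using app_split_compat[OF app_split_sym[OF sp]] by auto
  ultimately show ?thesis
    using typable_subst0[of PLin \<Gamma>1 M \<Gamma>2 N] by simp
qed

lemma typable_beta_coind:
  assumes "typable \<Gamma> (App (LamC M) (BoxC N))"
  shows "typable \<Gamma> (subst0 M N)"
proof -
  obtain \<Gamma>1 \<Gamma>2 where sp: "app_split \<Gamma> \<Gamma>1 \<Gamma>2" and "typable (ext PCo \<Gamma>1) M" "typable \<Gamma>2 (BoxC N)"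
    using assms by (auto simp: typable_App typable_LamC)
  moreover have "env_compat \<Gamma>1 \<Gamma>2" "\<Gamma>2 ++ \<Gamma>1 = \<Gamma>"
    using app_split_compat[OF app_split_sym[OF sp]] by auto
  ultimately show ?thesis
    using typable_subst0[of PCo \<Gamma>1 M \<Gamma>2 N] by simp
qed

text \<open>For the pattern \<open>#x\<close> the argument is used outside its box, so its environment is that of
  the box contents with linear patterns made \<open>#\<close>; these come from the \<open>\<down>y\<close> of the
  environment of the box.\<close>

lemma typable_beta_ind_sharp:
  assumes sp: "app_split \<Gamma> \<Gamma>1 \<Gamma>2" and tM: "typable (ext PSharp \<Gamma>1) M"
    and tN: "typable \<Gamma>2 (BoxI N)"
  obtains \<Gamma>' where "sharpens \<Gamma> \<Gamma>'" "typable \<Gamma>' (subst0 M N)"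
proof -
  define G where "G = (\<lambda>i. case mi_premise \<Gamma>2 i of Some PLin \<Rightarrow> Some PSharp | x \<Rightarrow> x)"
  have nl: "\<Gamma>2 i \<noteq> Some PLin" for i
    using tN by (simp add: typable_BoxI)
  have tD: "typable (mi_premise \<Gamma>2) N"
    using tN by (simp add: typable_BoxI)
  have G: "(\<Gamma>2 i = None \<and> G i = None) \<or> (\<Gamma>2 i = Some PInd \<and> G i = Some PSharp)
     \<or> (\<Gamma>2 i = Some PSharp \<and> G i = None) \<or> (\<Gamma>2 i = Some PCo \<and> G i = Some PCo)
     \<or> (\<Gamma>2 i = Some PDag \<and> G i = Some PDag)" for i
    using nl[of i] unfolding G_def mi_premise_apply
    by (cases "\<Gamma>2 i" rule: pat_option_exhaust) simp_all
  have "weakens (mi_premise \<Gamma>2) G"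
    unfolding weakens_def G_def by (auto split: option.split pat.split)
  then have "typable G N"
    using typable_weaken[OF tD] by blast
  moreover have "shared_only G"
    by (rule shared_onlyI) (use G in blast)
  moreover have "(\<forall>p q. \<Gamma>1 i = Some p \<longrightarrow> G i = Some q \<longrightarrow> p = q \<and> shared_pat p)
     \<and> ((G ++ \<Gamma>1) i = \<Gamma> i \<or> (\<Gamma> i = Some PInd \<and> (G ++ \<Gamma>1) i = Some PSharp))" for i
    using G[of i] sp[unfolded app_split_iff, rule_format, of i] unfolding map_add_apply pat_split_def
    by (elim disjE; cases "\<Gamma> i"; auto)
  then have "env_compat \<Gamma>1 G" "sharpens \<Gamma> (G ++ \<Gamma>1)"
    unfolding env_compat_def sharpens_def by blast+
  ultimately show ?thesis
    using that typable_subst0[OF tM] by simp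
qed

lemma typable_beta_ind:
  assumes "typable \<Gamma> (App (LamI M) (BoxI N))"
  obtains \<Gamma>' where "sharpens \<Gamma> \<Gamma>'" "typable \<Gamma>' (subst0 M N)"
proof -
  obtain \<Gamma>1 \<Gamma>2 where sp: "app_split \<Gamma> \<Gamma>1 \<Gamma>2" and tM: "typable \<Gamma>1 (LamI M)"
    and tN: "typable \<Gamma>2 (BoxI N)"
    using assms by (auto simp: typable_App)
  have "env_compat \<Gamma>1 \<Gamma>2" "\<Gamma>2 ++ \<Gamma>1 = \<Gamma>"
    using app_split_compat[OF app_split_sym[OF sp]] by auto
  then show ?thesis
    using tM tN typable_beta_ind_sharp[OF sp _ tN] typable_subst0[of PInd \<Gamma>1 M \<Gamma>2 N]
      that sharpens_refl
    by (auto simp: typable_LamI)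
qed

theorem subject_reduction:
  "red n M M' \<Longrightarrow> typable \<Gamma> M \<Longrightarrow> \<exists>\<Gamma>'. sharpens \<Gamma> \<Gamma>' \<and> typable \<Gamma>' M'"
proof (induction arbitrary: \<Gamma> rule: red.induct)
  case (beta_lin M N)
  then show ?case using typable_beta_lin sharpens_refl by blast
next
  case (beta_ind M N)
  then show ?case using typable_beta_ind by blast
next
  case (beta_coind M N)
  then show ?case using typable_beta_coind sharpens_refl by blast
next
  case (app_l n M M' N)
  obtain \<Gamma>1 \<Gamma>2 where sp: "app_split \<Gamma> \<Gamma>1 \<Gamma>2" and "typable \<Gamma>1 M" and t2: "typable \<Gamma>2 N"
    using app_l.prems unfolding typable_App by blast
  then obtain \<Gamma>1' where "sharpens \<Gamma>1 \<Gamma>1'" "typable \<Gamma>1' M'"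
    using app_l.IH by blast
  moreover obtain \<Gamma>' \<Gamma>2' where "app_split \<Gamma>' \<Gamma>1' \<Gamma>2'" "weakens \<Gamma>2 \<Gamma>2'" "sharpens \<Gamma> \<Gamma>'"
    using sharpens_app_split[OF sp calculation(1)] .
  ultimately show ?case
    using typable_weaken[OF t2] unfolding typable_App by blast
next
  case (app_r n N N' M)
  obtain \<Gamma>1 \<Gamma>2 where sp: "app_split \<Gamma> \<Gamma>2 \<Gamma>1" and t1: "typable \<Gamma>1 M" and "typable \<Gamma>2 N"
    using app_r.prems app_split_sym unfolding typable_App by blast
  then obtain \<Gamma>2' where "sharpens \<Gamma>2 \<Gamma>2'" "typable \<Gamma>2' N'"
    using app_r.IH by blast
  moreover obtain \<Gamma>' \<Gamma>1' where "app_split \<Gamma>' \<Gamma>2' \<Gamma>1'" "weakens \<Gamma>1 \<Gamma>1'" "sharpens \<Gamma> \<Gamma>'"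
    using sharpens_app_split[OF sp calculation(1)] .
  ultimately show ?case
    using typable_weaken[OF t1] app_split_sym unfolding typable_App by blast
next
  case (lam n M M')
  obtain \<Gamma>'' where sh: "sharpens (ext PLin \<Gamma>) \<Gamma>''" and t: "typable \<Gamma>'' M'"
    using lam.IH lam.prems unfolding typable_Lam by blast
  from sh obtain p' \<Gamma>' where "\<Gamma>'' = ext p' \<Gamma>'" "sharpens \<Gamma> \<Gamma>'" "p' = PLin \<or> (PLin = PInd \<and> p' = PSharp)"
    by (rule sharpens_ext)
  then show ?case
    using t typable_Lam by auto
next
  case (lamI n M M')
  obtain p \<Gamma>'' where p: "p = PSharp \<or> p = PInd"
    and sh: "sharpens (ext p \<Gamma>) \<Gamma>''" and t: "typable \<Gamma>'' M'"
    using lamI.IH lamI.prems unfolding typable_LamI by blast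
  from sh obtain p' \<Gamma>' where "\<Gamma>'' = ext p' \<Gamma>'" "sharpens \<Gamma> \<Gamma>'" "p' = p \<or> (p = PInd \<and> p' = PSharp)"
    by (rule sharpens_ext)
  then show ?case
    using p t typable_LamI by auto
next
  case (lamC n M M')
  obtain \<Gamma>'' where sh: "sharpens (ext PCo \<Gamma>) \<Gamma>''" and t: "typable \<Gamma>'' M'"
    using lamC.IH lamC.prems unfolding typable_LamC by blast
  from sh obtain p' \<Gamma>' where "\<Gamma>'' = ext p' \<Gamma>'" "sharpens \<Gamma> \<Gamma>'" "p' = PCo \<or> (PCo = PInd \<and> p' = PSharp)"
    by (rule sharpens_ext)
  then show ?case
    using t typable_LamC by auto
next
  case (boxI n M M')
  obtain \<Delta>' where "sharpens (mi_premise \<Gamma>) \<Delta>'" "typable \<Delta>' M'"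
    using boxI.IH boxI.prems unfolding typable_BoxI by blast
  then have "typable (mi_premise \<Gamma>) M'"
    using sharpens_no_ind[of "mi_premise \<Gamma>", OF mi_premise_no_ind] by blast
  then show ?case
    using boxI.prems sharpens_refl unfolding typable_BoxI by blast
next
  case (boxC n M M')
  have sh: "shared_only \<Gamma>"
    using boxC.prems unfolding typable_BoxC by blast
  obtain \<Delta>' where "sharpens (mc_premise \<Gamma>) \<Delta>'" "typable \<Delta>' M'"
    using boxC.IH boxC.prems unfolding typable_BoxC by blast
  then have "typable (mc_premise \<Gamma>) M'"
    using sharpens_no_ind[of "mc_premise \<Gamma>", OF mc_premise_no_ind[OF sh]] by blast
  then show ?case
    using sh sharpens_refl unfolding typable_BoxC by blast
qed

subsection \<open>The measure\<close>

text \<open>\<open>node_depths n d M X\<close>: \<open>X\<close> contains the inductive-box depth, counted from \<open>d\<close>, of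
  every node of \<open>M\<close> lying under exactly \<open>n\<close> coinductive boxes, a coinductive box at that
  level being a leaf.  As an inductive relation it only holds if there are finitely many.\<close>

definition root_depth :: "nat \<Rightarrow> nat \<Rightarrow> nat multiset" where
  "root_depth n d = (if n = 0 then {#d#} else {#})"

inductive node_depths :: "nat \<Rightarrow> nat \<Rightarrow> trm \<Rightarrow> nat multiset \<Rightarrow> bool" where
  Var: "node_depths n d (Var i) (root_depth n d)"
| App: "node_depths n d a A \<Longrightarrow> node_depths n d b B \<Longrightarrow> node_depths n d (App a b) (root_depth n d + A + B)"
| Lam: "node_depths n d a A \<Longrightarrow> node_depths n d (Lam a) (root_depth n d + A)"
| LamI: "node_depths n d a A \<Longrightarrow> node_depths n d (LamI a) (root_depth n d + A)"
| LamC: "node_depths n d a A \<Longrightarrow> node_depths n d (LamC a) (root_depth n d + A)"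
| BoxI: "node_depths n (Suc d) a A \<Longrightarrow> node_depths n d (BoxI a) (root_depth n d + A)"
| BoxC_top: "node_depths 0 d (BoxC a) {#d#}"
| BoxC_under: "node_depths n d a A \<Longrightarrow> node_depths (Suc n) d (BoxC a) A"

inductive_cases node_depths_VarE: "node_depths n d (Var i) X"
inductive_cases node_depths_AppE: "node_depths n d (App a b) X"
inductive_cases node_depths_LamE: "node_depths n d (Lam a) X"
inductive_cases node_depths_LamIE: "node_depths n d (LamI a) X"
inductive_cases node_depths_LamCE: "node_depths n d (LamC a) X"
inductive_cases node_depths_BoxIE: "node_depths n d (BoxI a) X"
inductive_cases node_depths_BoxCE: "node_depths n d (BoxC a) X"

lemma node_depths_unique: "node_depths n d M A \<Longrightarrow> node_depths n d M B \<Longrightarrow> A = B"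
proof (induction arbitrary: B rule: node_depths.induct)
  case (Var n d i) from Var.prems show ?case by (rule node_depths_VarE) simp
next
  case (App n d a A b B') from App.prems show ?case by (rule node_depths_AppE) (metis App.IH)
next
  case (Lam n d a A) from Lam.prems show ?case by (rule node_depths_LamE) (metis Lam.IH)
next
  case (LamI n d a A) from LamI.prems show ?case by (rule node_depths_LamIE) (metis LamI.IH)
next
  case (LamC n d a A) from LamC.prems show ?case by (rule node_depths_LamCE) (metis LamC.IH)
next
  case (BoxI n d a A) from BoxI.prems show ?case by (rule node_depths_BoxIE) (metis BoxI.IH)
next
  case (BoxC_top d a) from BoxC_top.prems show ?case by (rule node_depths_BoxCE) simp_all
next
  case (BoxC_under n d a A) from BoxC_under.prems show ?case by (rule node_depths_BoxCE) (simp_all add: BoxC_under.IH)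
qed

lemma node_depths_exists_ind:
  assumes IHn: "\<And>m \<Gamma> M d. n = Suc m \<Longrightarrow> typable \<Gamma> M \<Longrightarrow> \<exists>A. node_depths m d M A"
  shows "typ_ind typable \<Gamma> M \<Longrightarrow> \<exists>A. node_depths n d M A"
proof (induction arbitrary: d rule: typ_ind.induct)
  case (vl \<Gamma> x) then show ?case by (auto intro: node_depths.Var)
next
  case (vd \<Gamma> x) then show ?case by (auto intro: node_depths.Var)
next
  case (va \<Gamma> x) then show ?case by (auto intro: node_depths.Var)
next
  case (a \<Gamma> \<Gamma>1 \<Gamma>2 M N) then show ?case by (meson node_depths.App)
next
  case (ll \<Gamma> M) then show ?case by (meson node_depths.Lam)
next
  case (li1 \<Gamma> M) then show ?case by (meson node_depths.LamI)
next
  case (li2 \<Gamma> M) then show ?case by (meson node_depths.LamI)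
next
  case (lc \<Gamma> M) then show ?case by (meson node_depths.LamC)
next
  case (mi \<Gamma> \<Delta> M) then show ?case by (meson node_depths.BoxI)
next
  case (mc \<Gamma> \<Delta> M)
  show ?case
  proof (cases n)
    case 0 then show ?thesis by (auto intro: node_depths.BoxC_top)
  next
    case (Suc m) then show ?thesis using IHn[OF Suc mc(2)] by (meson node_depths.BoxC_under)
  qed
qed

text \<open>Finiteness of the part of a typable term above its coinductive boxes of depth \<open>n\<close>:
  typing derivations have only finitely many inductive rules between two applications of (mc).\<close>

lemma node_depths_exists: "typable \<Gamma> M \<Longrightarrow> \<exists>A. node_depths n d M A"
proof (induction n arbitrary: \<Gamma> M d)
  case 0
  then show ?case
    using node_depths_exists_ind[of 0] typable_iff[THEN iffD1] by blast
next
  case (Suc n)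
  then show ?case
    using node_depths_exists_ind[of "Suc n"] typable_iff[THEN iffD1] by blast
qed

lemma root_depth_shift: "image_mset (\<lambda>x. x + e) (root_depth n d) = root_depth n (d + e)"
  by (simp add: root_depth_def)

lemma node_depths_shift: "node_depths n d M A \<Longrightarrow> node_depths n (d + e) M (image_mset (\<lambda>x. x + e) A)"
proof (induction rule: node_depths.induct)
  case (Var n d i) then show ?case using node_depths.Var[of n "d+e" i] by (simp add: root_depth_shift)
next
  case (App n d a A b B) then show ?case using node_depths.App[OF App.IH] by (simp add: root_depth_shift)
next
  case (Lam n d a A) then show ?case using node_depths.Lam[OF Lam.IH] by (simp add: root_depth_shift)
next
  case (LamI n d a A) then show ?case using node_depths.LamI[OF LamI.IH] by (simp add: root_depth_shift)
next
  case (LamC n d a A) then show ?case using node_depths.LamC[OF LamC.IH] by (simp add: root_depth_shift)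
next
  case (BoxI n d a A) 
  have "node_depths n (Suc (d + e)) a (image_mset (\<lambda>x. x + e) A)" using BoxI.IH by simp
  then show ?case using node_depths.BoxI by (simp add: root_depth_shift)
next
  case (BoxC_top d a) then show ?case using node_depths.BoxC_top[of "d+e"] by simp
next
  case (BoxC_under n d a A) then show ?case using node_depths.BoxC_under by simp
qed

lemma node_depths_lift: "node_depths n d M A \<Longrightarrow> node_depths n d (lift k M) A"
proof (induction arbitrary: k rule: node_depths.induct)
qed (auto intro: node_depths.intros)

inductive var_depths :: "nat \<Rightarrow> nat \<Rightarrow> trm \<Rightarrow> nat multiset \<Rightarrow> bool" where
  Var: "var_depths k d (Var i) (if i = k then {#d#} else {#})"
| App: "var_depths k d a A \<Longrightarrow> var_depths k d b B \<Longrightarrow> var_depths k d (App a b) (A + B)"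
| Lam: "var_depths (Suc k) d a A \<Longrightarrow> var_depths k d (Lam a) A"
| LamI: "var_depths (Suc k) d a A \<Longrightarrow> var_depths k d (LamI a) A"
| LamC: "var_depths (Suc k) d a A \<Longrightarrow> var_depths k d (LamC a) A"
| BoxI: "var_depths k (Suc d) a A \<Longrightarrow> var_depths k d (BoxI a) A"
| BoxC: "var_depths k d (BoxC a) {#}"

inductive_cases var_depths_VarE: "var_depths k d (Var i) Q"
inductive_cases var_depths_AppE: "var_depths k d (App a b) Q"
inductive_cases var_depths_LamE: "var_depths k d (Lam a) Q"
inductive_cases var_depths_LamIE: "var_depths k d (LamI a) Q"
inductive_cases var_depths_LamCE: "var_depths k d (LamC a) Q"
inductive_cases var_depths_BoxIE: "var_depths k d (BoxI a) Q"
inductive_cases var_depths_BoxCE: "var_depths k d (BoxC a) Q"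

lemma node_depths_substs:
  "node_depths n d M X \<Longrightarrow> n = 0 \<Longrightarrow> var_depths k d M Q \<Longrightarrow> (\<forall>e. node_depths 0 e P (SP e)) \<Longrightarrow>
   \<exists>Y. X = Y + Q \<and> node_depths 0 d (substs k P M) (Y + sum_mset (image_mset SP Q))"
proof (induction arbitrary: k P Q rule: node_depths.induct)
  case (Var n d i)
  from Var.prems(2) have o: "Q = (if i = k then {#d#} else {#})" by (rule var_depths_VarE) simp
  show ?case
  proof (cases "i = k")
    case True
    then show ?thesis using o Var.prems by (auto simp: root_depth_def substs_Var)
  next
    case False
    have "node_depths 0 d (substs k P (Var i)) {#d#}" 
      using node_depths.Var[of 0 d] False by (simp add: substs_Var root_depth_def)
    then show ?thesis using o False Var.prems by (auto simp: root_depth_def)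
  qed
next
  case (App n d a A b B)
  from App.prems(2) obtain OA OB where o: "Q = OA + OB" "var_depths k d a OA" "var_depths k d b OB"
    by (rule var_depths_AppE) blast
  obtain YA where ya: "A = YA + OA" "node_depths 0 d (substs k P a) (YA + sum_mset (image_mset SP OA))"
    using App.IH(1)[OF App.prems(1) o(2) App.prems(3)] by blast
  obtain YB where yb: "B = YB + OB" "node_depths 0 d (substs k P b) (YB + sum_mset (image_mset SP OB))"
    using App.IH(2)[OF App.prems(1) o(3) App.prems(3)] by blast
  have "node_depths 0 d (substs k P (App a b)) (root_depth 0 d + (YA + sum_mset (image_mset SP OA)) + (YB + sum_mset (image_mset SP OB)))"
    using node_depths.App[OF ya(2) yb(2)] by simp
  then show ?case using ya(1) yb(1) o(1) App.prems(1)
    by (intro exI[of _ "root_depth n d + YA + YB"]) (simp add: ac_simps)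
next
  case (Lam n d a A)
  from Lam.prems(2) have o: "var_depths (Suc k) d a Q" by (rule var_depths_LamE) blast
  have "\<forall>e. node_depths 0 e (lift 0 P) (SP e)" using Lam.prems(3) node_depths_lift by blast
  then obtain Y where "A = Y + Q" "node_depths 0 d (substs (Suc k) (lift 0 P) a) (Y + sum_mset (image_mset SP Q))"
    using Lam.IH[OF Lam.prems(1) o] by blast
  then show ?case using node_depths.Lam[of 0 d "substs (Suc k) (lift 0 P) a" "Y + sum_mset (image_mset SP Q)"] Lam.prems(1)
    by (intro exI[of _ "root_depth n d + Y"]) (simp add: ac_simps)
next
  case (LamI n d a A)
  from LamI.prems(2) have o: "var_depths (Suc k) d a Q" by (rule var_depths_LamIE) blast
  have "\<forall>e. node_depths 0 e (lift 0 P) (SP e)" using LamI.prems(3) node_depths_lift by blast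
  then obtain Y where "A = Y + Q" "node_depths 0 d (substs (Suc k) (lift 0 P) a) (Y + sum_mset (image_mset SP Q))"
    using LamI.IH[OF LamI.prems(1) o] by blast
  then show ?case using node_depths.LamI[of 0 d "substs (Suc k) (lift 0 P) a" "Y + sum_mset (image_mset SP Q)"] LamI.prems(1)
    by (intro exI[of _ "root_depth n d + Y"]) (simp add: ac_simps)
next
  case (LamC n d a A)
  from LamC.prems(2) have o: "var_depths (Suc k) d a Q" by (rule var_depths_LamCE) blast
  have "\<forall>e. node_depths 0 e (lift 0 P) (SP e)" using LamC.prems(3) node_depths_lift by blast
  then obtain Y where "A = Y + Q" "node_depths 0 d (substs (Suc k) (lift 0 P) a) (Y + sum_mset (image_mset SP Q))"
    using LamC.IH[OF LamC.prems(1) o] by blast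
  then show ?case using node_depths.LamC[of 0 d "substs (Suc k) (lift 0 P) a" "Y + sum_mset (image_mset SP Q)"] LamC.prems(1)
    by (intro exI[of _ "root_depth n d + Y"]) (simp add: ac_simps)
next
  case (BoxI n d a A)
  from BoxI.prems(2) have o: "var_depths k (Suc d) a Q" by (rule var_depths_BoxIE) blast
  obtain Y where "A = Y + Q" "node_depths 0 (Suc d) (substs k P a) (Y + sum_mset (image_mset SP Q))"
    using BoxI.IH[OF BoxI.prems(1) o BoxI.prems(3)] by blast
  then show ?case using node_depths.BoxI[of 0 d "substs k P a" "Y + sum_mset (image_mset SP Q)"] BoxI.prems(1)
    by (intro exI[of _ "root_depth n d + Y"]) (simp add: ac_simps)
next
  case (BoxC_top d a)
  from BoxC_top.prems(2) have "Q = {#}" by (rule var_depths_BoxCE) blast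
  then show ?case using node_depths.BoxC_top by simp
next
  case (BoxC_under n d a A) then show ?case by simp
qed

text \<open>The depths, outside coinductive boxes, at which a variable bound at depth \<open>d\<close> with the
  given pattern may occur.\<close>

fun var_depths_fit :: "pat option \<Rightarrow> nat \<Rightarrow> nat multiset \<Rightarrow> bool" where
  "var_depths_fit None d Q = (Q = {#})"
| "var_depths_fit (Some PLin) d Q = (Q = {#d#})"
| "var_depths_fit (Some PSharp) d Q = (set_mset Q \<subseteq> {d})"
| "var_depths_fit (Some PInd) d Q = (Q = {#Suc d#})"
| "var_depths_fit (Some PCo) d Q = (Q = {#})"
| "var_depths_fit (Some PDag) d Q = True"

lemma var_depths_fit_split:
  assumes "pat_split a a1 a2" "var_depths_fit a1 d Q1" "var_depths_fit a2 d Q2"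
  shows "var_depths_fit a d (Q1 + Q2)"
  using assms unfolding pat_split_def by (cases a rule: pat_option_exhaust) auto

lemma var_depths_fit_mi: "a \<noteq> Some PLin \<Longrightarrow> var_depths_fit (mi_pat a) (Suc d) Q \<Longrightarrow> var_depths_fit a d Q"
  by (cases a rule: pat_option_exhaust) simp_all

lemma var_depths_fit_empty: "a \<noteq> Some PLin \<Longrightarrow> a \<noteq> Some PInd \<Longrightarrow> var_depths_fit a d {#}"
  by (cases a rule: pat_option_exhaust) simp_all

lemma var_depths_fit_Var:
  assumes "\<Gamma> x = Some u" "u \<in> {PLin, PSharp, PDag}" "shared_only (\<Gamma>(x := None))"
  shows "var_depths_fit (\<Gamma> k) d (if x = k then {#d#} else {#})"
proof (cases "x = k")
  case False
  then have "\<Gamma> k \<noteq> Some PLin" "\<Gamma> k \<noteq> Some PInd"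
    using assms(3)[unfolded shared_only_iff, rule_format, of k] by auto
  then show ?thesis
    using False var_depths_fit_empty by simp
qed (use assms(1,2) in auto)

lemma var_depths_typ_ind: "typ_ind R \<Gamma> M \<Longrightarrow> \<exists>Q. var_depths k d M Q \<and> var_depths_fit (\<Gamma> k) d Q"
proof (induction arbitrary: k d rule: typ_ind.induct)
  case (vl \<Gamma> x)
  then show ?case using var_depths.Var var_depths_fit_Var by blast
next
  case (vd \<Gamma> x)
  then show ?case using var_depths.Var var_depths_fit_Var by blast
next
  case (va \<Gamma> x)
  then show ?case using var_depths.Var var_depths_fit_Var by blast
next
  case (a \<Gamma> \<Gamma>1 \<Gamma>2 M N)
  obtain O1 O2 where "var_depths k d M O1" "var_depths_fit (\<Gamma>1 k) d O1" "var_depths k d N O2" "var_depths_fit (\<Gamma>2 k) d O2"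
    using a.IH by blast
  moreover have "pat_split (\<Gamma> k) (\<Gamma>1 k) (\<Gamma>2 k)" using a.hyps(1) app_split_iff by blast
  ultimately show ?case using var_depths.App var_depths_fit_split by blast
next
  case (ll \<Gamma> M)
  obtain Q where q: "var_depths (Suc k) d M Q" "var_depths_fit (ext PLin \<Gamma> (Suc k)) d Q" using ll.IH by blast
  then show ?case using var_depths.Lam[OF q(1)] by auto
next
  case (li1 \<Gamma> M)
  obtain Q where q: "var_depths (Suc k) d M Q" "var_depths_fit (ext PSharp \<Gamma> (Suc k)) d Q" using li1.IH by blast
  then show ?case using var_depths.LamI[OF q(1)] by auto
next
  case (li2 \<Gamma> M)
  obtain Q where q: "var_depths (Suc k) d M Q" "var_depths_fit (ext PInd \<Gamma> (Suc k)) d Q" using li2.IH by blast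
  then show ?case using var_depths.LamI[OF q(1)] by auto
next
  case (lc \<Gamma> M)
  obtain Q where q: "var_depths (Suc k) d M Q" "var_depths_fit (ext PCo \<Gamma> (Suc k)) d Q" using lc.IH by blast
  then show ?case using var_depths.LamC[OF q(1)] by auto
next
  case (mi \<Gamma> \<Delta> M)
  have D: "\<Delta> = mi_premise \<Gamma>" "\<Gamma> k \<noteq> Some PLin" using mi.hyps(1) unfolding mi_env_iff by auto
  obtain Q where "var_depths k (Suc d) M Q" "var_depths_fit (\<Delta> k) (Suc d) Q" using mi.IH by blast
  then have "var_depths k d (BoxI M) Q" "var_depths_fit (mi_pat (\<Gamma> k)) (Suc d) Q" using var_depths.BoxI D(1) mi_premise_apply by auto
  then show ?case using var_depths_fit_mi[OF D(2)] by blast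
next
  case (mc \<Gamma> \<Delta> M)
  have "shared_only \<Gamma>" using mc.hyps(1) unfolding mc_env_iff by blast
  then have "\<Gamma> k \<noteq> Some PLin" "\<Gamma> k \<noteq> Some PInd"
    unfolding shared_only_iff by (metis shared_pat_simps(4,5))+
  then show ?case using var_depths.BoxC var_depths_fit_empty by blast
qed

lemma mult_less_than_add_context:
  "(A, B) \<in> mult less_than \<Longrightarrow> (C + A + D, C + B + D) \<in> mult less_than"
  using mult_cancel[OF trans_less_than, of "C + D" A B] by (simp add: irrefl_on_def ac_simps)

lemma mult_add_nonempty: "J \<noteq> {#} \<Longrightarrow> (I, I + J) \<in> mult r"
  using one_step_implies_mult[of J "{#}" r I] by simp

lemma node_depths_shift0:
  "node_depths 0 0 N N0 \<Longrightarrow> node_depths 0 e N (image_mset (\<lambda>x. x + e) N0)"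
  using node_depths_shift[of 0 0 N N0] by simp

lemma node_depths_BoxC_topE: "node_depths 0 d (BoxC a) X \<Longrightarrow> X = {#d#}"
  by (erule node_depths_BoxCE) simp_all

lemma node_depths_BoxC_underE: "node_depths (Suc n) d (BoxC a) X \<Longrightarrow> node_depths n d a X"
  by (erule node_depths_BoxCE) simp_all

lemma node_depths_beta_lin:
  assumes "typable \<Gamma> (App (Lam M) N)" "node_depths 0 d (App (Lam M) N) X"
    "node_depths 0 d (subst0 M N) X'"
  shows "(X', X) \<in> mult less_than"
proof -
  obtain \<Gamma>1 \<Gamma>2 where tM: "typable (ext PLin \<Gamma>1) M" and tN: "typable \<Gamma>2 N"
    using assms(1) unfolding typable_App typable_Lam by blast
  from assms(2) obtain XL XN where x: "X = root_depth 0 d + XL + XN"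
    "node_depths 0 d (Lam M) XL" "node_depths 0 d N XN"
    by (rule node_depths_AppE) blast
  from x(2) obtain XM where xm: "XL = root_depth 0 d + XM" "node_depths 0 d M XM"
    by (rule node_depths_LamE) blast
  obtain Q where q: "var_depths 0 d M Q" "var_depths_fit (ext PLin \<Gamma>1 0) d Q"
    using var_depths_typ_ind typable_iff[THEN iffD1, OF tM] by blast
  have Q: "Q = {#d#}"
    using q(2) by (simp add: ext_apply)
  obtain N0 where "node_depths 0 0 N N0"
    using node_depths_exists[OF tN] by blast
  define SP where "SP e = image_mset (\<lambda>x. x + e) N0" for e
  have sp: "\<forall>e. node_depths 0 e N (SP e)"
    unfolding SP_def using node_depths_shift0[OF \<open>node_depths 0 0 N N0\<close>] by blast
  obtain Y where y: "XM = Y + Q" "node_depths 0 d (substs 0 N M) (Y + sum_mset (image_mset SP Q))"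
    using node_depths_substs[OF xm(2) refl q(1) sp] by blast
  have "X' = Y + SP d"
    using node_depths_unique[OF assms(3)[unfolded subst0_def] y(2)] Q by simp
  moreover have "XN = SP d"
    using node_depths_unique[OF x(3)] sp by blast
  ultimately have "X = X' + {#d, d, d#}"
    using x(1) xm(1) y(1) Q by (simp add: root_depth_def ac_simps)
  then show ?thesis
    using mult_add_nonempty[of "{#d, d, d#}" X'] by simp
qed

lemma node_depths_beta_ind:
  assumes "typable \<Gamma> (App (LamI M) (BoxI N))" "node_depths 0 d (App (LamI M) (BoxI N)) X"
    "node_depths 0 d (subst0 M N) X'"
  shows "(X', X) \<in> mult less_than"
proof -
  obtain \<Gamma>1 \<Gamma>2 where t1: "typable \<Gamma>1 (LamI M)" and t2: "typable \<Gamma>2 (BoxI N)"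
    using assms(1) unfolding typable_App by blast
  from assms(2) obtain XL XB where x: "X = root_depth 0 d + XL + XB"
    "node_depths 0 d (LamI M) XL" "node_depths 0 d (BoxI N) XB"
    by (rule node_depths_AppE) blast
  from x(2) obtain XM where xm: "XL = root_depth 0 d + XM" "node_depths 0 d M XM"
    by (rule node_depths_LamIE) blast
  from x(3) obtain XN where xn: "XB = root_depth 0 d + XN" "node_depths 0 (Suc d) N XN"
    by (rule node_depths_BoxIE) blast
  obtain N0 where "node_depths 0 0 N N0"
    using node_depths_exists t2 unfolding typable_BoxI by blast
  define SP where "SP e = image_mset (\<lambda>x. x + e) N0" for e
  have sp: "\<forall>e. node_depths 0 e N (SP e)"
    unfolding SP_def using node_depths_shift0[OF \<open>node_depths 0 0 N N0\<close>] by blast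
  have XN: "XN = SP (Suc d)"
    using node_depths_unique[OF xn(2)] sp by blast
  obtain p where p: "p = PSharp \<or> p = PInd" and tM: "typable (ext p \<Gamma>1) M"
    using t1 unfolding typable_LamI by blast
  obtain Q where q: "var_depths 0 d M Q" "var_depths_fit (ext p \<Gamma>1 0) d Q"
    using var_depths_typ_ind typable_iff[THEN iffD1, OF tM] by blast
  obtain Y where y: "XM = Y + Q" "node_depths 0 d (substs 0 N M) (Y + sum_mset (image_mset SP Q))"
    using node_depths_substs[OF xm(2) refl q(1) sp] by blast
  have X': "X' = Y + sum_mset (image_mset SP Q)"
    using node_depths_unique[OF assms(3)[unfolded subst0_def] y(2)] .
  from p show ?thesis
  proof
    assume "p = PSharp"
    then have Qd: "set_mset Q \<subseteq> {d}"
      using q(2) by (simp add: ext_apply)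
    define J where "J = {#d, d, d#} + Q + SP (Suc d)"
    have "X = Y + J"
      using x(1) xm(1) xn(1) y(1) XN unfolding J_def by (simp add: root_depth_def ac_simps)
    moreover have "\<exists>j \<in> set_mset J. (k, j) \<in> less_than"
      if k: "k \<in> set_mset (sum_mset (image_mset SP Q))" for k
    proof -
      obtain e where e: "e \<in># Q" "k \<in># SP e"
        using k by auto
      then obtain z where "z \<in># N0" "k = z + d"
        using Qd unfolding SP_def by auto
      then have "z + Suc d \<in># J" "(k, z + Suc d) \<in> less_than"
        unfolding J_def SP_def by auto
      then show ?thesis by blast
    qed
    ultimately show ?thesis
      using one_step_implies_mult[of J _ less_than Y] X' unfolding J_def by auto
  next
    assume "p = PInd"
    then have "Q = {#Suc d#}"
      using q(2) by (simp add: ext_apply)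
    then have "X = X' + {#d, d, d, Suc d#}"
      using x(1) xm(1) xn(1) y(1) XN X' by (simp add: root_depth_def ac_simps)
    then show ?thesis
      using mult_add_nonempty[of "{#d, d, d, Suc d#}" X'] by simp
  qed
qed

lemma node_depths_beta_coind:
  assumes "typable \<Gamma> (App (LamC M) (BoxC N))" "node_depths 0 d (App (LamC M) (BoxC N)) X"
    "node_depths 0 d (subst0 M N) X'"
  shows "(X', X) \<in> mult less_than"
proof -
  obtain \<Gamma>1 \<Gamma>2 where tM: "typable (ext PCo \<Gamma>1) M" and t2: "typable \<Gamma>2 (BoxC N)"
    using assms(1) unfolding typable_App typable_LamC by blast
  from assms(2) obtain XL XB where x: "X = root_depth 0 d + XL + XB"
    "node_depths 0 d (LamC M) XL" "node_depths 0 d (BoxC N) XB"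
    by (rule node_depths_AppE) blast
  from x(2) obtain XM where xm: "XL = root_depth 0 d + XM" "node_depths 0 d M XM"
    by (rule node_depths_LamCE) blast
  obtain N0 where "node_depths 0 0 N N0"
    using node_depths_exists t2 unfolding typable_BoxC by blast
  define SP where "SP e = image_mset (\<lambda>x. x + e) N0" for e
  have sp: "\<forall>e. node_depths 0 e N (SP e)"
    unfolding SP_def using node_depths_shift0[OF \<open>node_depths 0 0 N N0\<close>] by blast
  obtain Q where q: "var_depths 0 d M Q" "var_depths_fit (ext PCo \<Gamma>1 0) d Q"
    using var_depths_typ_ind typable_iff[THEN iffD1, OF tM] by blast
  have Q: "Q = {#}"
    using q(2) by (simp add: ext_apply)
  obtain Y where y: "XM = Y + Q" "node_depths 0 d (substs 0 N M) (Y + sum_mset (image_mset SP Q))"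
    using node_depths_substs[OF xm(2) refl q(1) sp] by blast
  have "X' = Y"
    using node_depths_unique[OF assms(3)[unfolded subst0_def] y(2)] Q by simp
  then have "X = X' + {#d, d, d#}"
    using x(1) xm(1) y(1) Q node_depths_BoxC_topE[OF x(3)] by (simp add: root_depth_def ac_simps)
  then show ?thesis
    using mult_add_nonempty[of "{#d, d, d#}" X'] by simp
qed

theorem node_depths_red:
  "red n M M' \<Longrightarrow> typable \<Gamma> M \<Longrightarrow> node_depths n d M X \<Longrightarrow> node_depths n d M' X' \<Longrightarrow>
    (X', X) \<in> mult less_than"
proof (induction arbitrary: \<Gamma> d X X' rule: red.induct)
  case (beta_lin M N)
  then show ?case by (rule node_depths_beta_lin)
next
  case (beta_ind M N)
  then show ?case by (rule node_depths_beta_ind)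
next
  case (beta_coind M N)
  then show ?case by (rule node_depths_beta_coind)
next
  case (app_l n M M' N)
  obtain \<Gamma>1 where t1: "typable \<Gamma>1 M"
    using app_l.prems(1) unfolding typable_App by blast
  from app_l.prems(2) obtain A B where x: "X = root_depth n d + A + B"
    "node_depths n d M A" "node_depths n d N B"
    by (rule node_depths_AppE) blast
  from app_l.prems(3) obtain A' B' where x': "X' = root_depth n d + A' + B'"
    "node_depths n d M' A'" "node_depths n d N B'"
    by (rule node_depths_AppE) blast
  have "B' = B"
    using node_depths_unique[OF x'(3) x(3)] .
  then show ?case
    using mult_less_than_add_context[OF app_l.IH[OF t1 x(2) x'(2)]] x x' by simp
next
  case (app_r n N N' M)
  obtain \<Gamma>2 where t2: "typable \<Gamma>2 N"
    using app_r.prems(1) unfolding typable_App by blast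
  from app_r.prems(2) obtain A B where x: "X = root_depth n d + A + B"
    "node_depths n d M A" "node_depths n d N B"
    by (rule node_depths_AppE) blast
  from app_r.prems(3) obtain A' B' where x': "X' = root_depth n d + A' + B'"
    "node_depths n d M A'" "node_depths n d N' B'"
    by (rule node_depths_AppE) blast
  have "A' = A"
    using node_depths_unique[OF x'(2) x(2)] .
  then show ?case
    using mult_less_than_add_context[OF app_r.IH[OF t2 x(3) x'(3)], of "root_depth n d + A" "{#}"] x x'
    by (simp add: ac_simps)
next
  case (lam n M M')
  from lam.prems(2) obtain A where x: "X = root_depth n d + A" "node_depths n d M A"
    by (rule node_depths_LamE) blast
  from lam.prems(3) obtain A' where x': "X' = root_depth n d + A'" "node_depths n d M' A'"
    by (rule node_depths_LamE) blast
  have t: "typable (ext PLin \<Gamma>) M"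
    using lam.prems(1) unfolding typable_Lam .
  show ?case
    using mult_less_than_add_context[OF lam.IH[OF t x(2) x'(2)], of "root_depth n d" "{#}"] x x'
    by simp
next
  case (lamI n M M')
  from lamI.prems(2) obtain A where x: "X = root_depth n d + A" "node_depths n d M A"
    by (rule node_depths_LamIE) blast
  from lamI.prems(3) obtain A' where x': "X' = root_depth n d + A'" "node_depths n d M' A'"
    by (rule node_depths_LamIE) blast
  obtain \<Gamma>' where t: "typable \<Gamma>' M"
    using lamI.prems(1) unfolding typable_LamI by blast
  show ?case
    using mult_less_than_add_context[OF lamI.IH[OF t x(2) x'(2)], of "root_depth n d" "{#}"] x x'
    by simp
next
  case (lamC n M M')
  from lamC.prems(2) obtain A where x: "X = root_depth n d + A" "node_depths n d M A"
    by (rule node_depths_LamCE) blast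
  from lamC.prems(3) obtain A' where x': "X' = root_depth n d + A'" "node_depths n d M' A'"
    by (rule node_depths_LamCE) blast
  have t: "typable (ext PCo \<Gamma>) M"
    using lamC.prems(1) unfolding typable_LamC .
  show ?case
    using mult_less_than_add_context[OF lamC.IH[OF t x(2) x'(2)], of "root_depth n d" "{#}"] x x'
    by simp
next
  case (boxI n M M')
  from boxI.prems(2) obtain A where x: "X = root_depth n d + A" "node_depths n (Suc d) M A"
    by (rule node_depths_BoxIE) blast
  from boxI.prems(3) obtain A' where x': "X' = root_depth n d + A'" "node_depths n (Suc d) M' A'"
    by (rule node_depths_BoxIE) blast
  have t: "typable (mi_premise \<Gamma>) M"
    using boxI.prems(1) unfolding typable_BoxI by blast
  show ?case
    using mult_less_than_add_context[OF boxI.IH[OF t x(2) x'(2)], of "root_depth n d" "{#}"] x x'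
    by simp
next
  case (boxC n M M')
  have t: "typable (mc_premise \<Gamma>) M"
    using boxC.prems(1) unfolding typable_BoxC by blast
  then show ?case
    using boxC.IH node_depths_BoxC_underE boxC.prems(2,3) by blast
qed

theorem mainTheorem14:
  fixes n :: nat
  shows "\<not> (\<exists>f :: nat \<Rightarrow> trm. is_term (f 0) \<and> (\<forall>i. red n (f i) (f (Suc i))))"
proof
  assume "\<exists>f :: nat \<Rightarrow> trm. is_term (f 0) \<and> (\<forall>i. red n (f i) (f (Suc i)))"
  then obtain f :: "nat \<Rightarrow> trm" where f0: "is_term (f 0)" and steps: "\<forall>i. red n (f i) (f (Suc i))"
    by blast
  have typable_f: "\<exists>\<Gamma>. typable \<Gamma> (f i)" for i
  proof (induction i)
    case 0
    then show ?case using f0 unfolding is_term_def by blast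
  next
    case (Suc i)
    then show ?case using subject_reduction steps by blast
  qed
  define X where "X i = (THE X. node_depths n 0 (f i) X)" for i
  have X: "node_depths n 0 (f i) (X i)" for i
    using typable_f[of i] node_depths_exists node_depths_unique unfolding X_def by (metis theI)
  have "(X (Suc i), X i) \<in> mult less_than" for i
    using typable_f[of i] node_depths_red steps X by blast
  then show False
    using wf_mult[OF wf_less_than] wf_iff_no_infinite_down_chain by blast
qed

end
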